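(* Let $a$ be a prime, $s\ge1$, $k_1,\dots,k_s\ge0$ integers, $F=F_{a^{k_1}}\otimes\cdots\otimes F_{a^{k_s}}$ of size $N=a^{k_1+\cdots+k_s}$ with indexing group $I_F=\mathbb Z_{a^{k_1}}\times\cdots\times\mathbb Z_{a^{k_s}}$, $k_{\max}=\max_x k_x$, and $K(l)=\#\{x: k_x<l\}$. If $k_{\max}=0$ then $\mathbf D(F)=1$. If $k_{\max}>0$ then: (a) $\mathbf D(F)=\sum_{m=0}^{k_{\max}}\frac{N}{a^m}\,n_m$, where $n_m$ is the number of elements of order $a^m$ in $I_F$ (equivalently, the number of rows of $F$ consisting of $a^m$-th roots of unity). (b) $\mathbf D(F)=\frac Na\Big((a-1)\big(1+\sum_{m=1}^{k_{\max}}a^{-m+\sum_{x=1}^s\min(k_x,m)}\big)+a^{-k_{\max}+\sum_{x=1}^sk_x}\Big)$. (c) $\mathbf D(F)=\frac Na\Big((a-1)\big(1+\sum_{m=1}^{k_{\max}}a^{sm-\sum_{l=1}^m(K(l)+1)}\big)+a^{sk_{\max}-\sum_{l=1}^{k_{\max}}(K(l)+1)}\Big)$, and $sk_{\max}-\sum_{l=1}^{k_{\max}}(K(l)+1)=-k_{\max}+\sum_xk_x$. (d) Let $0<c_1<\dots<c_r=k_{\max}$ be the distinct nonzero values among the $k_x$, and set $c_0=0$. For $(\alpha,\beta)=(c_{y-1},c_y)$, $y=1,\dots,r$, let $\mu=s-K(\beta)-1\ (\ge0)$ and $$P(\alpha,\beta)=a^{\sum_{k_x\le\alpha}k_x+\mu(\alpha+1)}\sum_{d=0}^{\beta-\alpha-1}a^{\mu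 d}$$ (empty sums are $0$; note $\sum_{k_x\le\alpha}k_x+\mu(\alpha+1)=s(\alpha+1)-\sum_{l=1}^{\alpha+1}(K(l)+1)$). Then $\mu=0$ exactly when $y=r$ and $k_{\max}$ occurs only once among the $k_x$, in which case $P(\alpha,\beta)=a^{\sum_{k_x\le\alpha}k_x}(\beta-\alpha)$; otherwise $P(\alpha,\beta)=a^{\sum_{k_x\le\alpha}k_x+\mu(\alpha+1)}\frac{1-a^{\mu(\beta-\alpha)}}{1-a^{\mu}}$. Moreover $$\mathbf D(F)=\frac Na\Big((a-1)\big(1+P(c_0,c_1)+P(c_1,c_2)+\cdots+P(c_{r-1},c_r)\big)+a^{-k_{\max}+\sum_xk_x}\Big),$$ and the degrees (as polynomials in $a$) of $1,P(c_0,c_1),\dots,P(c_{r-1},c_r)$ form an increasing sequence, except that the last two degrees are equal, which happens if and only if $k_{\max}$ occurs exactly once among the $k_x$. (e) $\mathbf D(F)=\frac Na\Big((a-1)\big(1+a^{e_1}(1+a^{e_2}(1+\cdots(1+a^{e_{k_{\max}}})\cdots))\big)+a^{sk_{\max}-\sum_{l=1}^{k_{\max}}(K(l)+1)}\Big)$ with $e_m=s-(K(m)+1)$; each $e_m\ge0$, and $e_m=0$ if and only if $k_{\max}$ occurs exactly once among the $k_x$ and $c_{r-1}+1\le m\le c_r$.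
   Context: For $n\ge1$, $F_n$ is the $n\times n$ matrix with rows and columns indexed by $\mathbb Z_n$ and entries $e^{2\pi i\,\tilde i\tilde j/n}$, and a Kronecker product $F_{N_1}\otimes\cdots\otimes F_{N_r}$ is indexed by $\mathbb Z_{N_1}\times\cdots\times\mathbb Z_{N_r}$ (entry at $(i,j)$ is $\prod_x(F_{N_x})_{i_x,j_x}$). For an $N\times N$ matrix $V$ with no zero entries and $V=\alpha U$ with $U$ unitary and $\alpha\ne0$, the undephased defect is $\mathbf D(V)=\dim_{\mathbb R}\{iR\circ V:\ R\text{ real},\ (iR\circ V)V^*\text{ antihermitian}\}$ ($\circ$ entrywise product). For a Fourier matrix this equals the number of entries of $F$ equal to $1$. *)

theory Defs
  imports "HOL-Analysis.Analysis" "HOL-Library.Function_Algebras"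
    "HOL-Computational_Algebra.Polynomial" "HOL-Computational_Algebra.Primes"
begin

text \<open>A matrix with rows and columns indexed by the finite set I is a function
  of type idx => idx => complex (entries outside I are irrelevant / zero).\<close>

definition mat_mult :: "'i set \<Rightarrow> ('i \<Rightarrow> 'i \<Rightarrow> complex) \<Rightarrow> ('i \<Rightarrow> 'i \<Rightarrow> complex) \<Rightarrow> ('i \<Rightarrow> 'i \<Rightarrow> complex)"
  where "mat_mult I A B = (\<lambda>i j. \<Sum>l\<in>I. A i l * B l j)"

definition mat_adj :: "('i \<Rightarrow> 'i \<Rightarrow> complex) \<Rightarrow> ('i \<Rightarrow> 'i \<Rightarrow> complex)"
  where "mat_adj A = (\<lambda>i j. cnj (A j i))"

definition antihermitian_on :: "'i set \<Rightarrow> ('i \<Rightarrow> 'i \<Rightarrow> complex) \<Rightarrow> bool"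
  where "antihermitian_on I A \<longleftrightarrow> (\<forall>i\<in>I. \<forall>j\<in>I. A i j = - cnj (A j i))"

definition rscale :: "real \<Rightarrow> ('i \<Rightarrow> 'i \<Rightarrow> complex) \<Rightarrow> ('i \<Rightarrow> 'i \<Rightarrow> complex)"
  where "rscale r A = (\<lambda>i j. complex_of_real r * A i j)"

definition undephased_defect :: "'i set \<Rightarrow> ('i \<Rightarrow> 'i \<Rightarrow> complex) \<Rightarrow> nat"
  where "undephased_defect I V =
     vector_space.dim rscale
       {W. \<exists>R :: 'i \<Rightarrow> 'i \<Rightarrow> real.
              (\<forall>i j. (i \<notin> I \<or> j \<notin> I) \<longrightarrow> R i j = 0) \<and>
              W = (\<lambda>i j. \<i> * complex_of_real (R i j) * V i j) \<and>
              antihermitian_on I (mat_mult I W (mat_adj V))}"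

text \<open>Index group Z_{n_1} x ... x Z_{n_s}, with elements represented as lists of
  canonical representatives.\<close>
definition index_set :: "nat list \<Rightarrow> nat list set"
  where "index_set ns = {i. length i = length ns \<and> (\<forall>x<length ns. i ! x < ns ! x)}"

definition fourier_kron :: "nat list \<Rightarrow> nat list \<Rightarrow> nat list \<Rightarrow> complex"
  where "fourier_kron ns i j =
     (if i \<in> index_set ns \<and> j \<in> index_set ns then
        (\<Prod>x<length ns. exp (2 * of_real pi * \<i> * of_nat (i ! x) * of_nat (j ! x) / of_nat (ns ! x)))
      else 0)"

definition elem_order :: "nat list \<Rightarrow> nat list \<Rightarrow> nat"
  where "elem_order ns i = (LEAST d. 0 < d \<and> (\<forall>x<length ns. ns ! x dvd d * i ! x))"

definition Kcount :: "nat list \<Rightarrow> nat \<Rightarrow> nat"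
  where "Kcount ks l = card {x. x < length ks \<and> ks ! x < l}"

definition cval :: "nat list \<Rightarrow> nat \<Rightarrow> nat"
  where "cval ks y = (if y = 0 then 0 else sorted_list_of_set {k \<in> set ks. 0 < k} ! (y - 1))"

definition rnum :: "nat list \<Rightarrow> nat"
  where "rnum ks = card {k \<in> set ks. 0 < k}"

definition mu :: "nat list \<Rightarrow> nat \<Rightarrow> int"
  where "mu ks \<beta> = int (length ks) - int (Kcount ks \<beta>) - 1"

definition sum_le :: "nat list \<Rightarrow> nat \<Rightarrow> nat"
  where "sum_le ks \<alpha> = (\<Sum>x | x < length ks \<and> ks ! x \<le> \<alpha>. ks ! x)"

definition Ppoly :: "nat list \<Rightarrow> nat \<Rightarrow> nat \<Rightarrow> real poly"
  where "Ppoly ks \<alpha> \<beta> =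
     monom 1 (sum_le ks \<alpha> + nat (mu ks \<beta>) * (\<alpha> + 1)) *
     (\<Sum>d<\<beta> - \<alpha>. monom 1 (nat (mu ks \<beta>) * d))"

fun nest :: "real \<Rightarrow> int list \<Rightarrow> real" where
  "nest x [] = 1"
| "nest x (e # es) = 1 + x powi e * nest x es"

end

theory Submission
  imports Defs
begin

text \<open>The condition that (i R \<circ> F) F^* be antihermitian is invariant under translations
  of the index group I. Expanding R in the real orthogonal basis cas_(u,d)(i, l) = cos \<theta> + sin \<theta>,
  e^(i\<theta>) = F(u, i) F(d, l), therefore decouples it: the basis functions with F(u, d) = 1 are
  solutions, and every other coefficient of a solution vanishes. So D(F) is the number of entries
  of F equal to 1, of which row u contains N / ord u. For moduli a^(k_x) the elements of order
  dividing a^m form a subgroup of size a^(\<Sum>x min (k_x, m)); summing by telescoping gives (b) and (c),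
  grouping m into the blocks between consecutive distinct exponents gives the geometric sums P of
  (d), and Horner's scheme gives (e).\<close>

section \<open>Roots of unity on the index group\<close>

lemma exp_2pi_frac_eq_1_iff:
  fixes m :: int and n :: nat
  assumes "0 < n"
  shows "exp (2 * of_real pi * \<i> * of_int m / of_nat n) = 1 \<longleftrightarrow> int n dvd m"
proof
  assume "int n dvd m"
  then obtain j where j: "m = int n * j" by (auto simp: dvd_def)
  have "2 * of_real pi * \<i> * of_int m / of_nat n = \<i> * (of_int j * (of_real pi * 2))"
    using assms by (simp add: j field_simps)
  then show "exp (2 * of_real pi * \<i> * of_int m / of_nat n) = 1" by simp
next
  assume "exp (2 * of_real pi * \<i> * of_int m / of_nat n) = 1"
  then obtain j :: int where "2 * pi * m / n = of_int (2 * j) * pi"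
    unfolding exp_eq_1 by auto
  then have "real_of_int m = real n * of_int j"
    using assms pi_gt_zero by (simp add: field_simps)
  then have "m = int n * j" by (metis of_int_eq_iff of_int_mult of_int_of_nat_eq)
  then show "int n dvd m" by simp
qed

lemma exp_2pi_frac_eq_1:
  fixes m :: int and n :: nat
  assumes "int n dvd m"
  shows "exp (2 * of_real pi * \<i> * of_int m / of_nat n) = 1"
  using assms exp_2pi_frac_eq_1_iff[of n m] by (cases "n = 0") auto

lemma sum_exp_2pi_frac:
  fixes m :: int and n :: nat
  assumes "0 < n"
  shows "(\<Sum>d<n. exp (2 * of_real pi * \<i> * of_int m * of_nat d / of_nat n)) =
         (if int n dvd m then of_nat n else 0)"
proof -
  define z where "z = exp (2 * of_real pi * \<i> * of_int m / of_nat n)"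
  have pw: "exp (2 * of_real pi * \<i> * of_int m * of_nat d / of_nat n) = z ^ d" for d
    unfolding z_def exp_of_nat_mult[symmetric] by (simp add: field_simps)
  have "z ^ n = exp (2 * of_real pi * \<i> * of_int (m * int n) / of_nat n)"
    using pw[of n] by simp
  also have "\<dots> = 1" by (rule exp_2pi_frac_eq_1) simp
  finally have zn: "z ^ n = 1" .
  show ?thesis
  proof (cases "int n dvd m")
    case True
    then have "z = 1" unfolding z_def by (rule exp_2pi_frac_eq_1)
    then show ?thesis by (simp add: pw True)
  next
    case False
    then have "z \<noteq> 1" unfolding z_def using exp_2pi_frac_eq_1_iff[OF assms] by simp
    then show ?thesis by (simp add: pw sum_gp_strict zn False)
  qed
qed

definition unit_phase :: "nat list \<Rightarrow> (nat \<Rightarrow> int) \<Rightarrow> complex" where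
  "unit_phase ns f = (\<Prod>x<length ns. exp (2 * of_real pi * \<i> * of_int (f x) / of_nat (ns ! x)))"

lemma unit_phase_mult: "unit_phase ns f * unit_phase ns g = unit_phase ns (\<lambda>x. f x + g x)"
  unfolding unit_phase_def prod.distrib[symmetric]
  by (rule prod.cong) (auto simp: exp_add[symmetric] add_divide_distrib distrib_left)

lemma unit_phase_cnj: "cnj (unit_phase ns f) = unit_phase ns (\<lambda>x. - f x)"
  unfolding unit_phase_def cnj_prod by (rule prod.cong) (auto simp: exp_cnj)

lemma unit_phase_power: "unit_phase ns f ^ t = unit_phase ns (\<lambda>x. int t * f x)"
  unfolding unit_phase_def prod_power_distrib exp_of_nat_mult[symmetric]
  by (rule prod.cong) (simp_all add: algebra_simps)

lemma unit_phase_eq_1: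
  "(\<And>x. x < length ns \<Longrightarrow> int (ns ! x) dvd f x) \<Longrightarrow> unit_phase ns f = 1"
  unfolding unit_phase_def by (rule prod.neutral) (auto intro: exp_2pi_frac_eq_1)

lemma unit_phase_cong:
  assumes "\<And>x. x < length ns \<Longrightarrow> int (ns ! x) dvd f x - g x"
  shows "unit_phase ns f = unit_phase ns g"
proof -
  have "unit_phase ns f = unit_phase ns g * unit_phase ns (\<lambda>x. f x - g x)"
    by (simp add: unit_phase_mult)
  also have "unit_phase ns (\<lambda>x. f x - g x) = 1" using assms by (rule unit_phase_eq_1)
  finally show ?thesis by simp
qed

lemma unit_phase_nonzero: "unit_phase ns f \<noteq> 0"
  unfolding unit_phase_def by (simp add: prod_zero_iff)

lemma index_set_Nil: "index_set [] = {[]}"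
  by (auto simp: index_set_def)

lemma index_set_Cons: "index_set (n # ns) = (\<lambda>(h, t). h # t) ` ({..<n} \<times> index_set ns)"
proof (rule set_eqI)
  fix u
  show "u \<in> index_set (n # ns) \<longleftrightarrow> u \<in> (\<lambda>(h, t). h # t) ` ({..<n} \<times> index_set ns)"
  proof
    assume u: "u \<in> index_set (n # ns)"
    then obtain h t where ht: "u = h # t" by (cases u) (auto simp: index_set_def)
    with u have "h < n" "t \<in> index_set ns" by (auto simp: index_set_def)
    then show "u \<in> (\<lambda>(h, t). h # t) ` ({..<n} \<times> index_set ns)" using ht by auto
  next
    assume "u \<in> (\<lambda>(h, t). h # t) ` ({..<n} \<times> index_set ns)"
    then show "u \<in> index_set (n # ns)"
      by (auto simp: index_set_def less_Suc_eq_0_disj)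
  qed
qed

lemma finite_index_set: "finite (index_set ns)"
  by (induction ns) (auto simp: index_set_Nil index_set_Cons)

lemma sum_index_set_prod:
  fixes f :: "nat \<Rightarrow> nat \<Rightarrow> 'a::comm_semiring_1"
  shows "(\<Sum>u\<in>index_set ns. \<Prod>x<length ns. f x (u ! x)) = (\<Prod>x<length ns. \<Sum>v<ns ! x. f x v)"
proof (induction ns arbitrary: f)
  case Nil
  then show ?case by (simp add: index_set_Nil)
next
  case (Cons n ns)
  have inj: "inj_on (\<lambda>(h, t). h # t) ({..<n} \<times> index_set ns)"
    by (auto simp: inj_on_def)
  have "(\<Sum>u\<in>index_set (n # ns). \<Prod>x<length (n # ns). f x (u ! x))
      = (\<Sum>(h, t)\<in>{..<n} \<times> index_set ns. f 0 h * (\<Prod>x<length ns. f (Suc x) (t ! x)))"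
    unfolding index_set_Cons sum.reindex[OF inj]
    by (rule sum.cong) (auto simp del: prod.lessThan_Suc simp: prod.lessThan_Suc_shift)
  also have "\<dots> = (\<Sum>h<n. f 0 h) * (\<Sum>t\<in>index_set ns. \<Prod>x<length ns. f (Suc x) (t ! x))"
    by (simp add: sum.cartesian_product[symmetric] sum_product)
  also have "\<dots> = (\<Prod>x<length (n # ns). \<Sum>v<(n # ns) ! x. f x v)"
    using Cons.IH[of "\<lambda>x. f (Suc x)"] by (simp del: prod.lessThan_Suc add: prod.lessThan_Suc_shift)
  finally show ?case .
qed

lemma card_index_set_coordinatewise:
  "card {u \<in> index_set ns. \<forall>x<length ns. Q x (u ! x)} = (\<Prod>x<length ns. card {v. v < ns ! x \<and> Q x v})"
proof -
  have "(\<Prod>x<length ns. if Q x (u ! x) then 1 else 0) = (if \<forall>x<length ns. Q x (u ! x) then 1 else (0::nat))"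
    for u by (auto simp: prod_zero_iff)
  then have "card {u \<in> index_set ns. \<forall>x<length ns. Q x (u ! x)}
     = (\<Sum>u\<in>index_set ns. \<Prod>x<length ns. if Q x (u ! x) then 1 else 0)"
    by (simp add: sum.inter_filter[OF finite_index_set, symmetric])
  also have "\<dots> = (\<Prod>x<length ns. \<Sum>v<ns ! x. if Q x v then 1 else 0)"
    by (rule sum_index_set_prod)
  also have "\<dots> = (\<Prod>x<length ns. card {v. v < ns ! x \<and> Q x v})"
    by (rule prod.cong[OF refl]) (simp add: sum.inter_filter[symmetric] Collect_conj_eq lessThan_def Int_commute)
  finally show ?thesis .
qed

lemma sum_index_set_unit_phase:
  assumes "\<And>x. x < length ns \<Longrightarrow> 0 < ns ! x"
  shows "(\<Sum>l\<in>index_set ns. unit_phase ns (\<lambda>x. m x * int (l ! x))) =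
         (if \<forall>x<length ns. int (ns ! x) dvd m x then of_nat (\<Prod>x<length ns. ns ! x) else 0)"
proof -
  have "(\<Sum>l\<in>index_set ns. unit_phase ns (\<lambda>x. m x * int (l ! x)))
     = (\<Prod>x<length ns. \<Sum>v<ns ! x. exp (2 * of_real pi * \<i> * of_int (m x) * of_nat v / of_nat (ns ! x)))"
    unfolding unit_phase_def sum_index_set_prod[symmetric]
    by (rule sum.cong[OF refl], rule prod.cong[OF refl]) (simp add: mult.assoc)
  also have "\<dots> = (\<Prod>x<length ns. if int (ns ! x) dvd m x then of_nat (ns ! x) else 0)"
    by (rule prod.cong[OF refl]) (simp add: sum_exp_2pi_frac assms)
  also have "\<dots> = (if \<forall>x<length ns. int (ns ! x) dvd m x then of_nat (\<Prod>x<length ns. ns ! x) else 0)"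
    by (auto simp: prod_zero_iff)
  finally show ?thesis .
qed

definition kron_char :: "nat list \<Rightarrow> nat list \<Rightarrow> nat list \<Rightarrow> complex" where
  "kron_char ns u l = unit_phase ns (\<lambda>x. int (u ! x) * int (l ! x))"

lemma fourier_kron_eq_kron_char:
  "u \<in> index_set ns \<Longrightarrow> l \<in> index_set ns \<Longrightarrow> fourier_kron ns u l = kron_char ns u l"
  unfolding fourier_kron_def kron_char_def unit_phase_def by (simp add: mult.assoc)

lemma fourier_kron_outside:
  "u \<notin> index_set ns \<or> l \<notin> index_set ns \<Longrightarrow> fourier_kron ns u l = 0"
  unfolding fourier_kron_def by auto

lemma kron_char_commute: "kron_char ns u l = kron_char ns l u"
  unfolding kron_char_def by (simp add: mult.commute)

lemma kron_char_nonzero: "kron_char ns u l \<noteq> 0"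
  unfolding kron_char_def by (rule unit_phase_nonzero)

lemma index_set_eq_iff_congruent:
  assumes "u \<in> index_set ns" "v \<in> index_set ns"
  shows "(\<forall>x<length ns. int (ns ! x) dvd int (u ! x) - int (v ! x)) \<longleftrightarrow> u = v"
proof
  assume h: "\<forall>x<length ns. int (ns ! x) dvd int (u ! x) - int (v ! x)"
  show "u = v"
  proof (rule nth_equalityI)
    show "length u = length v" using assms by (simp add: index_set_def)
    fix x assume "x < length u"
    then have x: "x < length ns" using assms by (simp add: index_set_def)
    have "int (u ! x) mod int (ns ! x) = int (v ! x) mod int (ns ! x)"
      using h x by (simp add: mod_eq_dvd_iff)
    moreover have "u ! x < ns ! x" "v ! x < ns ! x" using assms x by (auto simp: index_set_def)
    ultimately show "u ! x = v ! x" by simp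
  qed
qed simp

section \<open>The defect counts the entries equal to one\<close>

lemma kron_char_add:
  assumes "\<And>x. x < length ns \<Longrightarrow> int (ns ! x) dvd int (j ! x) - int (i ! x) - int (d ! x)"
  shows "kron_char ns u j = kron_char ns u i * kron_char ns u d"
  unfolding kron_char_def unit_phase_mult
proof (rule unit_phase_cong)
  fix x assume "x < length ns"
  then have "int (ns ! x) dvd int (u ! x) * (int (j ! x) - int (i ! x) - int (d ! x))"
    using assms by simp
  then show "int (ns ! x) dvd int (u ! x) * int (j ! x) - (int (u ! x) * int (i ! x) + int (u ! x) * int (d ! x))"
    by (simp add: algebra_simps)
qed

text \<open>Hartley's cas function: for p = (u, d) and q = (i, l), cas p q = cos \<theta> + sin \<theta>
  where e^(i\<theta>) = F(u, i) F(d, l). These real functions replace the characters of I \<times> I as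
  an orthogonal basis.\<close>
definition cas :: "nat list \<Rightarrow> nat list \<times> nat list \<Rightarrow> nat list \<times> nat list \<Rightarrow> real" where
  "cas ns p q = Re (kron_char ns (fst p) (fst q) * kron_char ns (snd p) (snd q)) +
                Im (kron_char ns (fst p) (fst q) * kron_char ns (snd p) (snd q))"

lemma of_real_cas: "complex_of_real (cas ns p q) =
   ((1 - \<i>) * (kron_char ns (fst p) (fst q) * kron_char ns (snd p) (snd q)) +
    (1 + \<i>) * cnj (kron_char ns (fst p) (fst q) * kron_char ns (snd p) (snd q))) / 2"
  unfolding cas_def by (simp add: complex_eq_iff)

lemma cas_commute: "cas ns p q = cas ns q p"
  unfolding cas_def by (simp add: kron_char_commute)

lemma sum_fun_apply: "(sum g A) x = (\<Sum>a\<in>A. g a x)"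
  by (induction A rule: infinite_finite_induct) auto

interpretation rscale_space: vector_space "rscale :: real \<Rightarrow> ('i \<Rightarrow> 'i \<Rightarrow> complex) \<Rightarrow> ('i \<Rightarrow> 'i \<Rightarrow> complex)"
  by unfold_locales (auto simp: rscale_def fun_eq_iff algebra_simps)

locale positive_moduli =
  fixes ns :: "nat list"
  assumes moduli_pos: "\<And>x. x < length ns \<Longrightarrow> 0 < ns ! x"
begin

abbreviation "I \<equiv> index_set ns"
abbreviation "N \<equiv> \<Prod>x<length ns. ns ! x"
abbreviation "V \<equiv> fourier_kron ns"

lemma N_pos: "0 < N"
  by (simp add: prod_pos moduli_pos)

lemma N_square_nonzero: "real N ^ 2 \<noteq> 0"
  by (intro power_not_zero) (use N_pos in linarith)

lemma sum_kron_char_mult: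
  "(\<Sum>i\<in>I. kron_char ns u i * kron_char ns u' i) =
   (if \<forall>x<length ns. int (ns ! x) dvd int (u ! x) + int (u' ! x) then of_nat N else 0)"
proof -
  have "(\<Sum>i\<in>I. kron_char ns u i * kron_char ns u' i) =
        (\<Sum>i\<in>I. unit_phase ns (\<lambda>x. (int (u ! x) + int (u' ! x)) * int (i ! x)))"
    unfolding kron_char_def by (rule sum.cong[OF refl]) (simp add: unit_phase_mult algebra_simps)
  then show ?thesis by (simp add: sum_index_set_unit_phase moduli_pos)
qed

lemma sum_kron_char_mult_cnj:
  assumes "u \<in> I" "u' \<in> I"
  shows "(\<Sum>i\<in>I. kron_char ns u i * cnj (kron_char ns u' i)) = (if u = u' then of_nat N else 0)"
proof -
  have "(\<Sum>i\<in>I. kron_char ns u i * cnj (kron_char ns u' i)) =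
        (\<Sum>i\<in>I. unit_phase ns (\<lambda>x. (int (u ! x) - int (u' ! x)) * int (i ! x)))"
    unfolding kron_char_def
    by (rule sum.cong[OF refl]) (simp add: unit_phase_mult unit_phase_cnj algebra_simps)
  then show ?thesis
    by (simp add: sum_index_set_unit_phase moduli_pos index_set_eq_iff_congruent[OF assms])
qed

lemma cas_orthogonal:
  assumes p: "p \<in> I \<times> I" and p': "p' \<in> I \<times> I"
  shows "(\<Sum>q\<in>I \<times> I. cas ns p q * cas ns p' q) = (if p = p' then real N ^ 2 else 0)"
proof -
  obtain u d u' d' where ud: "p = (u, d)" "p' = (u', d')" by force
  have I: "u \<in> I" "d \<in> I" "u' \<in> I" "d' \<in> I" using p p' ud by auto
  define z where "z q = kron_char ns u (fst q) * kron_char ns d (snd q)" for q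
  define z' where "z' q = kron_char ns u' (fst q) * kron_char ns d' (snd q)" for q
  define X where "X = (\<Sum>q\<in>I \<times> I. z q * z' q)"
  define Y where "Y = (\<Sum>q\<in>I \<times> I. z q * cnj (z' q))"
  have split: "(\<Sum>q\<in>I \<times> I. g (fst q) * h (snd q)) = (\<Sum>i\<in>I. g i) * (\<Sum>l\<in>I. (h l :: complex))"
    for g h unfolding sum_product sum.cartesian_product by (simp add: case_prod_unfold)
  have "X = (\<Sum>i\<in>I. kron_char ns u i * kron_char ns u' i) * (\<Sum>l\<in>I. kron_char ns d l * kron_char ns d' l)"
    unfolding X_def z_def z'_def by (subst split[symmetric]) (simp add: algebra_simps)
  then have X: "cnj X = X" by (simp add: sum_kron_char_mult)
  have "Y = (\<Sum>i\<in>I. kron_char ns u i * cnj (kron_char ns u' i)) *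
            (\<Sum>l\<in>I. kron_char ns d l * cnj (kron_char ns d' l))"
    unfolding Y_def z_def z'_def by (subst split[symmetric]) (simp add: algebra_simps)
  then have Y: "Y = (if p = p' then of_nat N ^ 2 else 0)"
    using sum_kron_char_mult_cnj I ud by (auto simp: power2_eq_square)
  have lin: "(\<Sum>q\<in>I \<times> I. (\<alpha> * f q + \<beta> * g q + \<gamma> * h q + \<delta> * k q) / 4) =
      (\<alpha> * sum f (I \<times> I) + \<beta> * sum g (I \<times> I) + \<gamma> * sum h (I \<times> I) + \<delta> * sum k (I \<times> I)) / 4"
    for \<alpha> \<beta> \<gamma> \<delta> :: complex and f g h k
    by (simp add: sum.distrib sum_divide_distrib[symmetric] sum_distrib_left)
  have "complex_of_real (\<Sum>q\<in>I \<times> I. cas ns p q * cas ns p' q)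
      = (\<Sum>q\<in>I \<times> I. ((- 2 * \<i>) * (z q * z' q) + (2 * \<i>) * (cnj (z q) * cnj (z' q))
                 + 2 * (z q * cnj (z' q)) + 2 * (cnj (z q) * z' q)) / 4)"
    by (simp add: of_real_cas z_def z'_def ud field_simps power2_eq_square)
  also have "\<dots> = (- 2 * \<i> * X + 2 * \<i> * cnj X + 2 * Y + 2 * cnj Y) / 4"
    unfolding lin X_def Y_def by simp
  also have "\<dots> = complex_of_real (if p = p' then real N ^ 2 else 0)"
    using X Y by (simp add: field_simps)
  finally show ?thesis by (simp only: of_real_eq_iff)
qed

definition row_ratio :: "nat list \<Rightarrow> nat list \<Rightarrow> nat list \<Rightarrow> complex" where
  "row_ratio i j l = unit_phase ns (\<lambda>x. (int (i ! x) - int (j ! x)) * int (l ! x))"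

lemma fourier_kron_mult_cnj:
  "i \<in> I \<Longrightarrow> j \<in> I \<Longrightarrow> l \<in> I \<Longrightarrow> V i l * cnj (V j l) = row_ratio i j l"
  by (simp add: fourier_kron_eq_kron_char kron_char_def row_ratio_def
      unit_phase_cnj unit_phase_mult algebra_simps)

definition defect_eqns :: "(nat list \<Rightarrow> nat list \<Rightarrow> real) \<Rightarrow> bool" where
  "defect_eqns R \<longleftrightarrow> (\<forall>i\<in>I. \<forall>j\<in>I. (\<Sum>l\<in>I. complex_of_real (R i l - R j l) * row_ratio i j l) = 0)"

lemma antihermitian_iff_defect_eqns:
  fixes R :: "nat list \<Rightarrow> nat list \<Rightarrow> real"
  defines "W \<equiv> (\<lambda>i j. \<i> * complex_of_real (R i j) * V i j)"
  shows "antihermitian_on I (mat_mult I W (mat_adj V)) \<longleftrightarrow> defect_eqns R"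
proof -
  have M: "mat_mult I W (mat_adj V) i j = (\<Sum>l\<in>I. \<i> * complex_of_real (R i l) * row_ratio i j l)"
    if "i \<in> I" "j \<in> I" for i j
    unfolding mat_mult_def mat_adj_def W_def
    by (rule sum.cong[OF refl]) (simp add: that fourier_kron_mult_cnj[symmetric] mult.assoc)
  have "cnj (row_ratio j i l) = row_ratio i j l" for i j l
    by (simp add: row_ratio_def unit_phase_cnj algebra_simps)
  then have "mat_mult I W (mat_adj V) i j + cnj (mat_mult I W (mat_adj V) j i)
      = \<i> * (\<Sum>l\<in>I. complex_of_real (R i l - R j l) * row_ratio i j l)"
    if "i \<in> I" "j \<in> I" for i j
    using that by (simp add: M sum_negf sum_subtractf[symmetric] sum_distrib_left algebra_simps)
  then show ?thesis
    unfolding antihermitian_on_def defect_eqns_def by (simp add: eq_neg_iff_add_eq_0)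
qed

lemma sum_cas_row_ratio:
  "(\<Sum>l\<in>I. complex_of_real (cas ns (u, d) (r, l)) * row_ratio i j l) =
    ((1 - \<i>) * kron_char ns u r *
        (if \<forall>x<length ns. int (ns ! x) dvd int (d ! x) + int (i ! x) - int (j ! x) then of_nat N else 0)
     + (1 + \<i>) * cnj (kron_char ns u r) *
        (if \<forall>x<length ns. int (ns ! x) dvd - int (d ! x) + int (i ! x) - int (j ! x) then of_nat N else 0)) / 2"
proof -
  have "(\<Sum>l\<in>I. kron_char ns d l * row_ratio i j l) =
        (\<Sum>l\<in>I. unit_phase ns (\<lambda>x. (int (d ! x) + int (i ! x) - int (j ! x)) * int (l ! x)))"
    by (rule sum.cong[OF refl]) (simp add: kron_char_def row_ratio_def unit_phase_mult algebra_simps)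
  moreover have "(\<Sum>l\<in>I. cnj (kron_char ns d l) * row_ratio i j l) =
        (\<Sum>l\<in>I. unit_phase ns (\<lambda>x. (- int (d ! x) + int (i ! x) - int (j ! x)) * int (l ! x)))"
    by (rule sum.cong[OF refl])
       (simp add: kron_char_def row_ratio_def unit_phase_mult unit_phase_cnj algebra_simps)
  moreover have "(\<Sum>l\<in>I. complex_of_real (cas ns (u, d) (r, l)) * row_ratio i j l) =
     (\<Sum>l\<in>I. ((1 - \<i>) * kron_char ns u r) * (kron_char ns d l * row_ratio i j l) / 2
              + ((1 + \<i>) * cnj (kron_char ns u r)) * (cnj (kron_char ns d l) * row_ratio i j l) / 2)"
    by (rule sum.cong[OF refl]) (simp add: of_real_cas field_simps)
  then have "(\<Sum>l\<in>I. complex_of_real (cas ns (u, d) (r, l)) * row_ratio i j l) =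
     ((1 - \<i>) * kron_char ns u r) * (\<Sum>l\<in>I. kron_char ns d l * row_ratio i j l) / 2
     + ((1 + \<i>) * cnj (kron_char ns u r)) * (\<Sum>l\<in>I. cnj (kron_char ns d l) * row_ratio i j l) / 2"
    by (simp add: sum.distrib sum_distrib_left sum_divide_distrib)
  ultimately show ?thesis
    by (simp add: sum_index_set_unit_phase moduli_pos add_divide_distrib)
qed

lemma cas_defect_eqns:
  assumes "kron_char ns u d = 1"
  shows "defect_eqns (\<lambda>i l. cas ns (u, d) (i, l))"
  unfolding defect_eqns_def
proof (intro ballI)
  fix i j
  have "kron_char ns u i = kron_char ns u j"
    if "\<forall>x<length ns. int (ns ! x) dvd int (d ! x) + int (i ! x) - int (j ! x)"
  proof -
    have "int (ns ! x) dvd int (j ! x) - int (i ! x) - int (d ! x)" if "x < length ns" for x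
      using that \<open>\<forall>x<_. _\<close> dvd_minus_iff[of "int (ns ! x)" "int (d ! x) + int (i ! x) - int (j ! x)"]
      by (simp add: algebra_simps)
    then show ?thesis using kron_char_add[of ns j i d u] assms by simp
  qed
  moreover have "kron_char ns u i = kron_char ns u j"
    if "\<forall>x<length ns. int (ns ! x) dvd - int (d ! x) + int (i ! x) - int (j ! x)"
    using that kron_char_add[of ns i j d u] assms by (simp add: algebra_simps)
  ultimately show "(\<Sum>l\<in>I. complex_of_real (cas ns (u, d) (i, l) - cas ns (u, d) (j, l)) * row_ratio i j l) = 0"
    by (simp add: sum_subtractf left_diff_distrib sum_cas_row_ratio)
qed

definition index_add :: "nat list \<Rightarrow> nat list \<Rightarrow> nat list" where
  "index_add i d = map (\<lambda>x. (i ! x + d ! x) mod ns ! x) [0..<length ns]"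

definition index_sub :: "nat list \<Rightarrow> nat list \<Rightarrow> nat list" where
  "index_sub j d = map (\<lambda>x. (j ! x + ns ! x - d ! x) mod ns ! x) [0..<length ns]"

lemma index_add_in: "index_add i d \<in> I"
  by (auto simp: index_add_def index_set_def moduli_pos)

lemma index_sub_in: "index_sub j d \<in> I"
  by (auto simp: index_sub_def index_set_def moduli_pos)

lemma index_sub_add: "i \<in> I \<Longrightarrow> d \<in> I \<Longrightarrow> index_sub (index_add i d) d = i"
proof -
  have "((i + d) mod n + n - d) mod n = i" if "i < n" "d < n" for i d n :: nat
    using that by (cases "i + d < n") (auto simp: mod_if)
  then show "i \<in> I \<Longrightarrow> d \<in> I \<Longrightarrow> ?thesis"
    by (intro nth_equalityI) (auto simp: index_add_def index_sub_def index_set_def)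
qed

lemma index_add_sub: "j \<in> I \<Longrightarrow> d \<in> I \<Longrightarrow> index_add (index_sub j d) d = j"
proof -
  have "((j + n - d) mod n + d) mod n = j" if "j < n" "d < n" for j d n :: nat
    using that by (cases "d \<le> j") (auto simp: mod_if)
  then show "j \<in> I \<Longrightarrow> d \<in> I \<Longrightarrow> ?thesis"
    by (intro nth_equalityI) (auto simp: index_add_def index_sub_def index_set_def)
qed

lemma index_add_congruent:
  "x < length ns \<Longrightarrow> int (ns ! x) dvd int (index_add i d ! x) - int (i ! x) - int (d ! x)"
proof -
  have "int n dvd (int i + int d) mod int n - (int i + int d)" for n i d :: nat
    by (simp add: mod_eq_dvd_iff[symmetric])
  then show "x < length ns \<Longrightarrow> ?thesis"
    by (simp add: index_add_def zmod_int algebra_simps)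
qed

lemma row_ratio_index_add: "row_ratio (index_add i d) i l = kron_char ns d l"
  unfolding row_ratio_def kron_char_def
proof (rule unit_phase_cong)
  fix x assume "x < length ns"
  then have "int (ns ! x) dvd int (l ! x) * (int (index_add i d ! x) - int (i ! x) - int (d ! x))"
    using index_add_congruent by simp
  then show "int (ns ! x) dvd (int (index_add i d ! x) - int (i ! x)) * int (l ! x) - int (d ! x) * int (l ! x)"
    by (simp add: algebra_simps)
qed

text \<open>The defect equations for the rows i + d and i say that the partial Fourier transform
  A i of R is invariant under translation by d; shifting the summation over i then multiplies
  the Fourier coefficient of R at (u, d) by kron_char u d.\<close>
lemma fourier_coeff_vanishes:
  assumes R: "defect_eqns R" and u: "u \<in> I" and d: "d \<in> I" and ne: "kron_char ns u d \<noteq> 1"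
  shows "(\<Sum>(i, l)\<in>I \<times> I. complex_of_real (R i l) * (kron_char ns u i * kron_char ns d l)) = 0"
proof -
  define A where "A i = (\<Sum>l\<in>I. complex_of_real (R i l) * kron_char ns d l)" for i
  have A_shift: "A (index_add i d) = A i" if "i \<in> I" for i
  proof -
    have "(\<Sum>l\<in>I. complex_of_real (R (index_add i d) l - R i l) * row_ratio (index_add i d) i l) = 0"
      using R index_add_in that unfolding defect_eqns_def by blast
    then show ?thesis
      unfolding A_def row_ratio_index_add by (simp add: algebra_simps sum_subtractf)
  qed
  define T where "T = (\<Sum>i\<in>I. kron_char ns u i * A i)"
  have "T = (\<Sum>i\<in>I. kron_char ns u (index_add i d) * A (index_add i d))"
    unfolding T_def
    by (rule sum.reindex_bij_witness[of _ "\<lambda>i. index_add i d" "\<lambda>j. index_sub j d"])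
       (auto simp: index_sub_add index_add_sub index_add_in index_sub_in d)
  also have "\<dots> = kron_char ns u d * T"
    unfolding T_def sum_distrib_left
    by (rule sum.cong[OF refl]) (simp add: A_shift kron_char_add[OF index_add_congruent] mult_ac)
  finally have "T = 0" using ne by (simp add: algebra_simps)
  then show ?thesis
    unfolding T_def A_def sum_distrib_left sum.cartesian_product
    by (simp add: case_prod_unfold algebra_simps)
qed

lemma cas_coeff_vanishes:
  assumes R: "defect_eqns R" and p: "p \<in> I \<times> I" and ne: "kron_char ns (fst p) (snd p) \<noteq> 1"
  shows "(\<Sum>q\<in>I \<times> I. R (fst q) (snd q) * cas ns p q) = 0"
proof -
  define z where "z q = kron_char ns (fst p) (fst q) * kron_char ns (snd p) (snd q)" for q
  define T where "T = (\<Sum>q\<in>I \<times> I. complex_of_real (R (fst q) (snd q)) * z q)"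
  have "T = 0"
    unfolding T_def z_def using fourier_coeff_vanishes[OF R _ _ ne] p
    by (simp add: case_prod_unfold mem_Times_iff)
  have "complex_of_real (\<Sum>q\<in>I \<times> I. R (fst q) (snd q) * cas ns p q)
     = (\<Sum>q\<in>I \<times> I. ((1 - \<i>) * (complex_of_real (R (fst q) (snd q)) * z q)
           + (1 + \<i>) * cnj (complex_of_real (R (fst q) (snd q)) * z q)) / 2)"
    by (simp add: of_real_cas z_def field_simps)
  also have "\<dots> = ((1 - \<i>) * T + (1 + \<i>) * cnj T) / 2"
    unfolding T_def by (simp add: sum.distrib sum_distrib_left sum_divide_distrib[symmetric])
  also have "\<dots> = 0" using \<open>T = 0\<close> by simp
  finally show ?thesis by (simp only: of_real_eq_0_iff)
qed

lemma cas_expansion: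
  assumes "q0 \<in> I \<times> I"
  shows "(\<Sum>p\<in>I \<times> I. (\<Sum>q\<in>I \<times> I. R (fst q) (snd q) * cas ns p q) * cas ns p q0)
        = real N ^ 2 * R (fst q0) (snd q0)"
proof -
  have "(\<Sum>p\<in>I \<times> I. (\<Sum>q\<in>I \<times> I. R (fst q) (snd q) * cas ns p q) * cas ns p q0)
      = (\<Sum>p\<in>I \<times> I. \<Sum>q\<in>I \<times> I. R (fst q) (snd q) * cas ns p q * cas ns p q0)"
    by (simp add: sum_distrib_right)
  also have "\<dots> = (\<Sum>q\<in>I \<times> I. \<Sum>p\<in>I \<times> I. R (fst q) (snd q) * cas ns p q * cas ns p q0)"
    by (rule sum.swap)
  also have "\<dots> = (\<Sum>q\<in>I \<times> I. R (fst q) (snd q) * (\<Sum>p\<in>I \<times> I. cas ns q p * cas ns q0 p))"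
    by (simp add: sum_distrib_left cas_commute mult.assoc)
  also have "\<dots> = (\<Sum>q\<in>I \<times> I. R (fst q) (snd q) * (if q = q0 then real N ^ 2 else 0))"
    by (rule sum.cong[OF refl]) (simp add: cas_orthogonal assms)
  also have "\<dots> = real N ^ 2 * R (fst q0) (snd q0)"
    using assms finite_index_set by (simp add: if_distrib cong: if_cong)
  finally show ?thesis .
qed

definition unit_entries :: "(nat list \<times> nat list) set" where
  "unit_entries = {p \<in> I \<times> I. kron_char ns (fst p) (snd p) = 1}"

definition cas_matrix :: "nat list \<times> nat list \<Rightarrow> nat list \<Rightarrow> nat list \<Rightarrow> complex" where
  "cas_matrix p = (\<lambda>i l. \<i> * complex_of_real (cas ns p (i, l)) * V i l)"

definition defect_space :: "(nat list \<Rightarrow> nat list \<Rightarrow> complex) set" where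
  "defect_space = {W. \<exists>R :: nat list \<Rightarrow> nat list \<Rightarrow> real.
              (\<forall>i j. (i \<notin> I \<or> j \<notin> I) \<longrightarrow> R i j = 0) \<and>
              W = (\<lambda>i j. \<i> * complex_of_real (R i j) * V i j) \<and>
              antihermitian_on I (mat_mult I W (mat_adj V))}"

lemma finite_unit_entries: "finite unit_entries"
  unfolding unit_entries_def using finite_index_set by auto

lemma defect_eqns_cong:
  "(\<And>i l. i \<in> I \<Longrightarrow> l \<in> I \<Longrightarrow> R i l = R' i l) \<Longrightarrow> defect_eqns R = defect_eqns R'"
  unfolding defect_eqns_def by (intro ball_cong refl arg_cong[where f = "\<lambda>x. x = 0"] sum.cong) auto

lemma cas_matrix_in_defect_space: "cas_matrix ` unit_entries \<subseteq> defect_space"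
proof
  fix w assume "w \<in> cas_matrix ` unit_entries"
  then obtain u d where p: "(u, d) \<in> unit_entries" and w: "w = cas_matrix (u, d)" by auto
  define R where "R i l = (if i \<in> I \<and> l \<in> I then cas ns (u, d) (i, l) else 0)" for i l
  have wR: "w = (\<lambda>i j. \<i> * complex_of_real (R i j) * V i j)"
    unfolding w cas_matrix_def R_def by (auto simp: fun_eq_iff fourier_kron_outside)
  have "defect_eqns (\<lambda>i l. cas ns (u, d) (i, l))"
    using p by (intro cas_defect_eqns) (simp add: unit_entries_def)
  then have "defect_eqns R" by (subst defect_eqns_cong[of _ "\<lambda>i l. cas ns (u, d) (i, l)"]) (simp_all add: R_def)
  then show "w \<in> defect_space"
    unfolding defect_space_def using wR antihermitian_iff_defect_eqns[of R]
    by (intro CollectI exI[of _ R]) (auto simp: R_def)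
qed

lemma defect_space_subset_span: "defect_space \<subseteq> rscale_space.span (cas_matrix ` unit_entries)"
proof
  fix W assume "W \<in> defect_space"
  then obtain R where R0: "\<forall>i j. (i \<notin> I \<or> j \<notin> I) \<longrightarrow> R i j = 0"
    and W: "W = (\<lambda>i j. \<i> * complex_of_real (R i j) * V i j)"
    and "antihermitian_on I (mat_mult I W (mat_adj V))" unfolding defect_space_def by blast
  then have R: "defect_eqns R" using antihermitian_iff_defect_eqns[of R] by simp
  define c where "c p = (\<Sum>q\<in>I \<times> I. R (fst q) (snd q) * cas ns p q) / real N ^ 2" for p
  have R_expansion: "R i l = (\<Sum>p\<in>unit_entries. c p * cas ns p (i, l))" if "i \<in> I" "l \<in> I" for i l
  proof -
    have "real N ^ 2 * R i l = (\<Sum>p\<in>I \<times> I. (\<Sum>q\<in>I \<times> I. R (fst q) (snd q) * cas ns p q) * cas ns p (i, l))"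
      using cas_expansion[of "(i, l)" R] that by simp
    also have "\<dots> = (\<Sum>p\<in>unit_entries. (\<Sum>q\<in>I \<times> I. R (fst q) (snd q) * cas ns p q) * cas ns p (i, l))"
      using finite_index_set cas_coeff_vanishes[OF R]
      by (intro sum.mono_neutral_right) (auto simp: unit_entries_def)
    finally show ?thesis using N_pos unfolding c_def
      by (simp add: sum_divide_distrib[symmetric] field_simps)
  qed
  have "W = (\<Sum>p\<in>unit_entries. rscale (c p) (cas_matrix p))"
  proof (intro ext)
    fix i l
    show "W i l = (\<Sum>p\<in>unit_entries. rscale (c p) (cas_matrix p)) i l"
    proof (cases "i \<in> I \<and> l \<in> I")
      case True
      then show ?thesis unfolding W sum_fun_apply rscale_def cas_matrix_def R_expansion[OF True[THEN conjunct1] True[THEN conjunct2]]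
        by (simp add: sum_distrib_left sum_distrib_right mult.assoc mult.left_commute)
    next
      case False
      then show ?thesis unfolding W sum_fun_apply rscale_def cas_matrix_def by (simp add: fourier_kron_outside)
    qed
  qed
  also have "\<dots> \<in> rscale_space.span (cas_matrix ` unit_entries)"
    by (intro rscale_space.span_sum rscale_space.span_scale rscale_space.span_base) auto
  finally show "W \<in> rscale_space.span (cas_matrix ` unit_entries)" .
qed

lemma cas_matrix_inj: "inj_on cas_matrix unit_entries"
proof (rule inj_onI)
  fix p p' assume p: "p \<in> unit_entries" and p': "p' \<in> unit_entries" and eq: "cas_matrix p = cas_matrix p'"
  have pI: "p \<in> I \<times> I" "p' \<in> I \<times> I" using p p' by (auto simp: unit_entries_def)
  have "cas ns p q = cas ns p' q" if "q \<in> I \<times> I" for q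
  proof -
    obtain i l where q: "q = (i, l)" by force
    have "cas_matrix p i l = cas_matrix p' i l" using eq by simp
    then show ?thesis
      using that q unfolding cas_matrix_def by (simp add: fourier_kron_eq_kron_char kron_char_nonzero)
  qed
  then have "(\<Sum>q\<in>I \<times> I. cas ns p q * cas ns p' q) = (\<Sum>q\<in>I \<times> I. cas ns p' q * cas ns p' q)"
    by (intro sum.cong) auto
  then show "p = p'"
    using cas_orthogonal[OF pI] cas_orthogonal[OF pI(2) pI(2)] N_square_nonzero by metis
qed

lemma cas_matrix_independent: "rscale_space.independent (cas_matrix ` unit_entries)"
proof (rule rscale_space.independent_if_scalars_zero)
  show "finite (cas_matrix ` unit_entries)" using finite_unit_entries by simp
  fix f and w :: "nat list \<Rightarrow> nat list \<Rightarrow> complex"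
  assume s: "(\<Sum>x\<in>cas_matrix ` unit_entries. rscale (f x) x) = 0" and w: "w \<in> cas_matrix ` unit_entries"
  then obtain p0 where p0: "p0 \<in> unit_entries" and wp: "w = cas_matrix p0" by auto
  define g where "g p = f (cas_matrix p)" for p
  have s': "(\<Sum>p\<in>unit_entries. rscale (g p) (cas_matrix p)) = 0"
    using s unfolding sum.reindex[OF cas_matrix_inj] g_def by (simp add: comp_def)
  have z: "(\<Sum>p\<in>unit_entries. g p * cas ns p q) = 0" if q: "q \<in> I \<times> I" for q
  proof -
    obtain i l where il: "q = (i, l)" by force
    have "(\<Sum>p\<in>unit_entries. rscale (g p) (cas_matrix p)) i l = 0" using s' by simp
    then have "\<i> * V i l * complex_of_real (\<Sum>p\<in>unit_entries. g p * cas ns p q) = 0"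
      unfolding sum_fun_apply rscale_def cas_matrix_def il by (simp add: sum_distrib_left mult_ac)
    moreover have "V i l \<noteq> 0" using q il by (simp add: fourier_kron_eq_kron_char kron_char_nonzero)
    ultimately have "complex_of_real (\<Sum>p\<in>unit_entries. g p * cas ns p q) = 0" by simp
    then show ?thesis by (simp only: of_real_eq_0_iff)
  qed
  have "0 = (\<Sum>q\<in>I \<times> I. (\<Sum>p\<in>unit_entries. g p * cas ns p q) * cas ns p0 q)"
    using z by simp
  also have "\<dots> = (\<Sum>q\<in>I \<times> I. \<Sum>p\<in>unit_entries. g p * cas ns p q * cas ns p0 q)"
    by (simp add: sum_distrib_right)
  also have "\<dots> = (\<Sum>p\<in>unit_entries. \<Sum>q\<in>I \<times> I. g p * cas ns p q * cas ns p0 q)"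
    by (rule sum.swap)
  also have "\<dots> = (\<Sum>p\<in>unit_entries. g p * (\<Sum>q\<in>I \<times> I. cas ns p q * cas ns p0 q))"
    by (simp add: sum_distrib_left mult.assoc)
  also have "\<dots> = (\<Sum>p\<in>unit_entries. g p * (if p = p0 then real N ^ 2 else 0))"
    using p0 by (intro sum.cong refl) (auto simp: unit_entries_def cas_orthogonal)
  also have "\<dots> = g p0 * real N ^ 2"
    using p0 finite_unit_entries by (simp add: if_distrib cong: if_cong)
  finally show "f w = 0" using N_square_nonzero wp g_def by (metis mult_eq_0_iff)
qed

theorem undephased_defect_eq_card_unit_entries: "undephased_defect I V = card unit_entries"
proof -
  have "undephased_defect I V = rscale_space.dim defect_space"
    unfolding undephased_defect_def defect_space_def ..
  also have "\<dots> = card (cas_matrix ` unit_entries)"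
    by (rule rscale_space.dim_unique[OF cas_matrix_in_defect_space defect_space_subset_span cas_matrix_independent refl])
  finally show ?thesis using card_image[OF cas_matrix_inj] by simp
qed

end

section \<open>Element orders and prime-power moduli\<close>

context positive_moduli
begin

lemma elem_order_pos: "0 < elem_order ns u"
  and elem_order_annihilates: "x < length ns \<Longrightarrow> ns ! x dvd elem_order ns u * u ! x"
  and elem_order_least: "0 < t \<Longrightarrow> t < elem_order ns u \<Longrightarrow> \<not> (\<forall>x<length ns. ns ! x dvd t * u ! x)"
proof -
  have "0 < N \<and> (\<forall>x<length ns. ns ! x dvd N * u ! x)"
    using N_pos by (auto intro!: dvd_mult2 dvd_prodI)
  then have "0 < elem_order ns u \<and> (\<forall>x<length ns. ns ! x dvd elem_order ns u * u ! x)"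
    unfolding elem_order_def by (rule LeastI)
  then show "0 < elem_order ns u" "x < length ns \<Longrightarrow> ns ! x dvd elem_order ns u * u ! x"
    by auto
  show "0 < t \<Longrightarrow> t < elem_order ns u \<Longrightarrow> \<not> (\<forall>x<length ns. ns ! x dvd t * u ! x)"
    unfolding elem_order_def using not_less_Least by blast
qed

lemma elem_order_dvd_iff: "elem_order ns u dvd t \<longleftrightarrow> (\<forall>x<length ns. ns ! x dvd t * u ! x)"
proof
  assume "elem_order ns u dvd t"
  then obtain k where "t = elem_order ns u * k" ..
  then have "t * u ! x = k * (elem_order ns u * u ! x)" for x
    by simp
  then show "\<forall>x<length ns. ns ! x dvd t * u ! x"
    using elem_order_annihilates dvd_mult by metis
next
  let ?o = "elem_order ns u"
  assume t: "\<forall>x<length ns. ns ! x dvd t * u ! x"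
  have "ns ! x dvd (t mod ?o) * u ! x" if "x < length ns" for x
  proof -
    have "t * u ! x = (t div ?o) * (?o * u ! x) + (t mod ?o) * u ! x"
      by (metis add_mult_distrib div_mult_mod_eq mult.assoc)
    moreover have "ns ! x dvd (t div ?o) * (?o * u ! x)"
      using elem_order_annihilates[OF that] by (rule dvd_mult)
    ultimately show ?thesis using t that by (metis dvd_add_right_iff)
  qed
  then have "t mod ?o = 0" using elem_order_least[of "t mod ?o" u] elem_order_pos[of u] by fastforce
  then show "?o dvd t" by auto
qed

text \<open>Double counting of the sum of kron_char u d ^ t over d \<in> I and t < ord u: the inner
  geometric sums pick out the d with kron_char u d = 1, the character sums only t = 0.\<close>
lemma card_unit_row: "card {d \<in> I. kron_char ns u d = 1} * elem_order ns u = N"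
proof -
  let ?o = "elem_order ns u"
  have root: "kron_char ns u d ^ ?o = 1" for d
    unfolding kron_char_def unit_phase_power
  proof (rule unit_phase_eq_1)
    fix x assume "x < length ns"
    then have "int (ns ! x) dvd int ?o * int (u ! x)"
      using elem_order_annihilates by (metis int_dvd_int_iff of_nat_mult)
    then show "int (ns ! x) dvd int ?o * (int (u ! x) * int (d ! x))"
      by (metis dvd_mult2 mult.assoc)
  qed
  have "(\<Sum>d\<in>I. \<Sum>t<?o. kron_char ns u d ^ t) = (\<Sum>d\<in>I. if kron_char ns u d = 1 then of_nat ?o else 0)"
    by (rule sum.cong[OF refl]) (simp add: sum_gp_strict root)
  also have "\<dots> = of_nat (card {d \<in> I. kron_char ns u d = 1} * ?o)"
    by (simp add: sum.inter_filter[symmetric] finite_index_set)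
  finally have "(\<Sum>d\<in>I. \<Sum>t<?o. kron_char ns u d ^ t) = of_nat (card {d \<in> I. kron_char ns u d = 1} * ?o)" .
  moreover have "(\<Sum>d\<in>I. \<Sum>t<?o. kron_char ns u d ^ t) = (of_nat N :: complex)"
  proof -
    have "(\<Sum>d\<in>I. \<Sum>t<?o. kron_char ns u d ^ t) =
          (\<Sum>t<?o. \<Sum>d\<in>I. unit_phase ns (\<lambda>x. (int t * int (u ! x)) * int (d ! x)))"
      unfolding kron_char_def unit_phase_power by (subst sum.swap) (simp add: mult.assoc)
    also have "\<dots> = (\<Sum>t<?o. if t = 0 then of_nat N else 0)"
    proof (rule sum.cong[OF refl])
      fix t assume "t \<in> {..<?o}"
      then have "(\<forall>x<length ns. int (ns ! x) dvd int t * int (u ! x)) \<longleftrightarrow> t = 0"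
        using elem_order_least[of t u] by (auto simp flip: of_nat_mult)
      then show "(\<Sum>d\<in>I. unit_phase ns (\<lambda>x. (int t * int (u ! x)) * int (d ! x))) =
                 (if t = 0 then of_nat N else 0)"
        by (simp add: sum_index_set_unit_phase moduli_pos)
    qed
    also have "\<dots> = of_nat N" using elem_order_pos[of u] by simp
    finally show ?thesis .
  qed
  ultimately show ?thesis by (simp only: of_nat_eq_iff)
qed

lemma defect_eq_sum_inverse_orders:
  "real (undephased_defect I V) = (\<Sum>u\<in>I. real N / real (elem_order ns u))"
proof -
  have "unit_entries = Sigma I (\<lambda>u. {d \<in> I. kron_char ns u d = 1})"
    unfolding unit_entries_def by auto
  then have "card unit_entries = (\<Sum>u\<in>I. card {d \<in> I. kron_char ns u d = 1})"
    using finite_index_set by (simp add: card_SigmaI)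
  moreover have "real (card {d \<in> I. kron_char ns u d = 1}) = real N / real (elem_order ns u)" for u
    using card_unit_row[of u] elem_order_pos[of u]
    by (simp add: field_simps flip: of_nat_mult)
  ultimately show ?thesis by (simp add: undephased_defect_eq_card_unit_entries)
qed

end

definition sum_min :: "nat list \<Rightarrow> nat \<Rightarrow> nat" where
  "sum_min ks m = (\<Sum>x<length ks. min (ks ! x) m)"

lemma card_multiples_below: "0 < q \<Longrightarrow> card {v. v < q * c \<and> q dvd v} = (c::nat)"
proof -
  assume q: "0 < q"
  have "{v. v < q * c \<and> q dvd v} = (\<lambda>t. q * t) ` {..<c}"
    using q by (auto elim!: dvdE)
  moreover have "inj_on (\<lambda>t. q * t) {..<c}" using q by (auto simp: inj_on_def)
  ultimately show ?thesis by (simp add: card_image)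
qed

lemma card_power_torsion:
  assumes a0: "0 < (a::nat)"
  shows "card {v. v < a ^ k \<and> a ^ k dvd a ^ m * v} = a ^ min k m"
proof (cases "k \<le> m")
  case True
  then have "a ^ k dvd a ^ m * v" for v by (simp add: le_imp_power_dvd)
  then show ?thesis using True by simp
next
  case False
  have e: "a ^ k = a ^ m * a ^ (k - m)" using False by (simp flip: power_add)
  have "a ^ k dvd a ^ m * v \<longleftrightarrow> a ^ (k - m) dvd v" for v
    unfolding e using a0 by (simp add: nat_mult_dvd_cancel1)
  then have "{v. v < a ^ k \<and> a ^ k dvd a ^ m * v} = {v. v < a ^ (k - m) * a ^ m \<and> a ^ (k - m) dvd v}"
    using e by (auto simp: mult.commute)
  then show ?thesis using False a0 by (simp add: card_multiples_below)
qed

lemma power_int_minus_add_of_nat: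
  "(x::real) \<noteq> 0 \<Longrightarrow> x powi (- int q + int p) = x ^ p / x ^ q"
  by (simp add: power_int_diff flip: diff_conv_add_uminus)

lemma telescope_weighted:
  fixes a :: real and g h :: "nat \<Rightarrow> real"
  assumes a: "a \<noteq> 0" and "h 0 = 1" and "g 0 = 1"
    and h_Suc: "\<And>m. h (Suc m) = g (Suc m) - g m / a"
  shows "(\<Sum>m = 0..K. h m) = 1 / a * ((a - 1) * (1 + (\<Sum>m = 1..K. g m)) + g K)"
proof (induction K)
  case 0
  then show ?case using assms by (simp add: field_simps)
next
  case (Suc K)
  then show ?case using a by (simp add: h_Suc field_simps)
qed

locale prime_power_moduli =
  fixes a :: nat and ks :: "nat list"
  assumes prime: "prime a"
begin

lemma a_ge_2: "2 \<le> a"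
  using prime prime_ge_2_nat by blast

lemma a_pos: "0 < a"
  using a_ge_2 by simp

sublocale positive_moduli "map (\<lambda>k. a ^ k) ks"
  by unfold_locales (simp add: a_pos)

abbreviation "ns \<equiv> map (\<lambda>k. a ^ k) ks"

lemma N_eq: "N = a ^ sum_list ks"
  by (simp add: power_sum sum_list_sum_nth atLeast0LessThan)

lemma card_elem_order_dvd: "card {u \<in> I. elem_order ns u dvd a ^ m} = a ^ sum_min ks m"
proof -
  have "card {u \<in> I. elem_order ns u dvd a ^ m} =
        card {u \<in> I. \<forall>x<length ns. (\<lambda>x v. ns ! x dvd a ^ m * v) x (u ! x)}"
    unfolding elem_order_dvd_iff by simp
  also have "\<dots> = (\<Prod>x<length ns. card {v. v < ns ! x \<and> ns ! x dvd a ^ m * v})"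
    by (rule card_index_set_coordinatewise)
  also have "\<dots> = (\<Prod>x<length ks. a ^ min (ks ! x) m)"
    by (rule prod.cong) (auto simp: card_power_torsion[OF a_pos])
  finally show ?thesis unfolding sum_min_def by (simp add: power_sum)
qed

lemma elem_order_eq_prime_power:
  assumes "\<forall>k\<in>set ks. k \<le> K"
  shows "\<exists>j\<le>K. elem_order ns u = a ^ j"
proof -
  have "elem_order ns u dvd a ^ K"
    unfolding elem_order_dvd_iff using assms by (auto simp: le_imp_power_dvd)
  then show ?thesis using divides_primepow_nat[OF prime] by auto
qed

lemma card_elem_order_eq_1: "card {u \<in> I. elem_order ns u = a ^ 0} = 1"
  using card_elem_order_dvd[of 0] by (simp add: sum_min_def)

lemma card_elem_order_eq_Suc:
  "card {u \<in> I. elem_order ns u = a ^ Suc m} = a ^ sum_min ks (Suc m) - a ^ sum_min ks m"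
proof -
  let ?A = "{u \<in> I. elem_order ns u = a ^ Suc m}"
  let ?B = "{u \<in> I. elem_order ns u dvd a ^ m}"
  have pow_dvd: "a ^ i dvd a ^ j \<longleftrightarrow> i \<le> j" for i j
    using a_ge_2 by (rule dvd_power_iff_le)
  have "{u \<in> I. elem_order ns u dvd a ^ Suc m} = ?A \<union> ?B"
  proof -
    have "elem_order ns u dvd a ^ Suc m \<longleftrightarrow> elem_order ns u = a ^ Suc m \<or> elem_order ns u dvd a ^ m" for u
      using divides_primepow_nat[OF prime, of "elem_order ns u"] pow_dvd
      by (metis dvd_refl le_Suc_eq)
    then show ?thesis by auto
  qed
  moreover have "?A \<inter> ?B = {}" using pow_dvd[of "Suc m" m] by auto
  ultimately have "a ^ sum_min ks (Suc m) = card ?A + a ^ sum_min ks m"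
    using card_elem_order_dvd[of "Suc m"] card_elem_order_dvd[of m] finite_index_set
    by (simp add: card_Un_disjoint)
  then show ?thesis by simp
qed

lemma defect_sum_orders:
  assumes "\<forall>k\<in>set ks. k \<le> K"
  shows "real (undephased_defect I V) =
    (\<Sum>m = 0..K. real N / real a ^ m * real (card {u \<in> I. elem_order ns u = a ^ m}))"
proof -
  have "real (undephased_defect I V) = (\<Sum>u\<in>I. real N / real (elem_order ns u))"
    by (rule defect_eq_sum_inverse_orders)
  also have "\<dots> = (\<Sum>y\<in>(\<lambda>m. a ^ m) ` {0..K}. \<Sum>u\<in>{u \<in> I. elem_order ns u = y}. real N / real (elem_order ns u))"
    using finite_index_set elem_order_eq_prime_power[OF assms]
    by (intro sum.group[symmetric]) (auto simp: image_iff Bex_def)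
  also have "\<dots> = (\<Sum>m = 0..K. \<Sum>u\<in>{u \<in> I. elem_order ns u = a ^ m}. real N / real (elem_order ns u))"
    using a_ge_2 by (intro sum.reindex_cong[OF _ refl]) (auto simp: inj_on_def power_inject_exp)
  finally show ?thesis by (simp add: ac_simps)
qed

lemma defect_telescoped:
  assumes "\<forall>k\<in>set ks. k \<le> K"
  shows "real (undephased_defect I V) = real N / real a *
        ((real a - 1) * (1 + (\<Sum>m = 1..K. real a powi (- int m + int (sum_min ks m))))
         + real a powi (- int K + int (sum_min ks K)))"
proof -
  define g where "g m = real a powi (- int m + int (sum_min ks m))" for m
  define h where "h m = real (card {u \<in> I. elem_order ns u = a ^ m}) / real a ^ m" for m
  have a0: "real a \<noteq> 0" using a_pos by simp
  have g: "g m = real a ^ sum_min ks m / real a ^ m" for m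
    unfolding g_def using a0 by (rule power_int_minus_add_of_nat)
  have "(\<Sum>m = 0..K. h m) = 1 / real a * ((real a - 1) * (1 + (\<Sum>m = 1..K. g m)) + g K)"
  proof (rule telescope_weighted[OF a0])
    show "h 0 = 1" using card_elem_order_eq_1 by (simp add: h_def)
    show "g 0 = 1" by (simp add: g sum_min_def)
    fix m
    have "a ^ sum_min ks m \<le> a ^ sum_min ks (Suc m)"
      using a_pos by (intro power_increasing) (auto simp: sum_min_def intro!: sum_mono)
    then show "h (Suc m) = g (Suc m) - g m / real a"
      unfolding h_def g card_elem_order_eq_Suc using a0 by (simp add: of_nat_diff field_simps)
  qed
  moreover have "real (undephased_defect I V) = real N * (\<Sum>m = 0..K. h m)"
    unfolding defect_sum_orders[OF assms] h_def by (simp add: sum_distrib_left)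
  ultimately show ?thesis unfolding g_def by simp
qed

end

section \<open>Sums over the exponent list\<close>

lemma nest_eq_sum_powi:
  fixes x :: real
  assumes "x \<noteq> 0"
  shows "nest x (map e [j..<j + n]) = 1 + (\<Sum>m = j..<j + n. x powi (\<Sum>l = j..m. e l))"
proof (induction n arbitrary: j)
  case 0
  then show ?case by simp
next
  case (Suc n)
  have "nest x (map e [j..<j + Suc n]) =
        1 + x powi e j * (1 + (\<Sum>m = Suc j..<Suc j + n. x powi (\<Sum>l = Suc j..m. e l)))"
    using Suc.IH[of "Suc j"] by (simp add: upt_rec)
  also have "\<dots> = 1 + (x powi e j + (\<Sum>m = Suc j..<Suc j + n. x powi (e j + (\<Sum>l = Suc j..m. e l))))"
    using assms by (simp add: distrib_left sum_distrib_left power_int_add)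
  also have "(\<Sum>m = Suc j..<Suc j + n. x powi (e j + (\<Sum>l = Suc j..m. e l))) =
             (\<Sum>m = Suc j..<Suc j + n. x powi (\<Sum>l = j..m. e l))"
    by (rule sum.cong[OF refl]) (simp add: sum.atLeast_Suc_atMost)
  also have "{j..<j + Suc n} = insert j {Suc j..<Suc j + n}" by auto
  ultimately show ?case by simp
qed

lemma two_le_card: "finite A \<Longrightarrow> x \<in> A \<Longrightarrow> y \<in> A \<Longrightarrow> x \<noteq> y \<Longrightarrow> 2 \<le> card A"
  using card_mono[of A "{x, y}"] by simp

lemma card_filter_split: "card {x. x < (s::nat) \<and> P x} + card {x. x < s \<and> \<not> P x} = s"
proof -
  have "{x. x < s \<and> P x} \<union> {x. x < s \<and> \<not> P x} = {..<s}" by auto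
  moreover have "{x. x < s \<and> P x} \<inter> {x. x < s \<and> \<not> P x} = {}" by auto
  ultimately show ?thesis
    using card_Un_disjoint[of "{x. x < s \<and> P x}" "{x. x < s \<and> \<not> P x}"] by simp
qed

lemma card_filter_eq_sum: "card {x. x < (s::nat) \<and> P x} = (\<Sum>x<s. if P x then 1 else 0)"
proof -
  have "{x. x < s \<and> P x} = {x \<in> {..<s}. P x}" by auto
  then show ?thesis using sum.inter_filter[of "{..<s}" "\<lambda>_. 1::nat" P] by simp
qed

lemma sum_min_Suc: "sum_min ks (Suc m) = sum_min ks m + card {x. x < length ks \<and> m < ks ! x}"
proof -
  have "sum_min ks (Suc m) = (\<Sum>x<length ks. min (ks ! x) m + (if m < ks ! x then 1 else 0))"
    unfolding sum_min_def by (rule sum.cong) auto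
  then show ?thesis unfolding sum_min_def card_filter_eq_sum by (simp add: sum.distrib)
qed

lemma sum_min_eq_sum_list: "\<forall>k\<in>set ks. k \<le> K \<Longrightarrow> sum_min ks K = sum_list ks"
  unfolding sum_min_def sum_list_sum_nth atLeast0LessThan by (rule sum.cong) auto

lemma Kcount_partial_sum:
  "int (length ks) * int m - (\<Sum>l = 1..m. int (Kcount ks l) + 1) = - int m + int (sum_min ks m)"
proof (induction m)
  case 0
  then show ?case by (simp add: sum_min_def)
next
  case (Suc m)
  have "int (length ks) - int (Kcount ks (Suc m)) = int (card {x. x < length ks \<and> m < ks ! x})"
    using card_filter_split[of "length ks" "\<lambda>x. m < ks ! x"]
    unfolding Kcount_def by (simp add: not_less less_Suc_eq_le)
  with Suc show ?case by (simp add: sum_min_Suc algebra_simps)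
qed

locale nonzero_exponents =
  fixes ks :: "nat list"
  assumes ks_nonempty: "ks \<noteq> []" and kmax_pos: "0 < Max (set ks)"
begin

abbreviation "kmax \<equiv> Max (set ks)"
abbreviation "s \<equiv> length ks"
abbreviation "r \<equiv> rnum ks"
abbreviation "cs \<equiv> sorted_list_of_set {k \<in> set ks. 0 < k}"

lemma kmax_in: "kmax \<in> set ks"
  using ks_nonempty by simp

lemma length_cs: "length cs = r"
  unfolding rnum_def by simp

lemma cval_in_set: "1 \<le> y \<Longrightarrow> y \<le> r \<Longrightarrow> cval ks y \<in> set ks \<and> 0 < cval ks y"
proof -
  assume y: "1 \<le> y" "y \<le> r"
  then have "cs ! (y - 1) \<in> set cs" using length_cs by (intro nth_mem) simp
  then show ?thesis using y unfolding cval_def by simp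
qed

lemma cval_strict_mono: "y < y' \<Longrightarrow> y' \<le> r \<Longrightarrow> cval ks y < cval ks y'"
proof -
  assume yy: "y < y'" "y' \<le> r"
  show ?thesis
  proof (cases "y = 0")
    case True
    then show ?thesis using cval_in_set[of y'] yy by (simp add: cval_def)
  next
    case False
    have "sorted_wrt (<) cs" by simp
    then have "cs ! (y - 1) < cs ! (y' - 1)"
      using sorted_wrt_nth_less[of "(<)" cs "y - 1" "y' - 1"] yy False length_cs by simp
    then show ?thesis using False yy by (simp add: cval_def)
  qed
qed

lemma cval_mono: "y \<le> y' \<Longrightarrow> y' \<le> r \<Longrightarrow> cval ks y \<le> cval ks y'"
  using cval_strict_mono[of y y'] by (cases "y = y'") auto

lemma cval_pred_less: "1 \<le> y \<Longrightarrow> y \<le> r \<Longrightarrow> cval ks (y - 1) < cval ks y"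
  using cval_strict_mono[of "y - 1" y] by simp

lemma cval_attains: "k \<in> set ks \<Longrightarrow> 0 < k \<Longrightarrow> \<exists>y. 1 \<le> y \<and> y \<le> r \<and> cval ks y = k"
proof -
  assume "k \<in> set ks" "0 < k"
  then have "k \<in> set cs" by simp
  then obtain i where "i < length cs" "cs ! i = k" unfolding in_set_conv_nth by blast
  then show ?thesis using length_cs by (intro exI[of _ "Suc i"]) (simp add: cval_def)
qed

lemma rnum_pos: "1 \<le> r"
proof -
  have "kmax \<in> {k \<in> set ks. 0 < k}" using kmax_in kmax_pos by simp
  then show ?thesis unfolding rnum_def by (auto simp: Suc_le_eq card_gt_0_iff)
qed

lemma cval_rnum: "cval ks r = kmax"
proof -
  obtain y where "y \<le> r" "cval ks y = kmax" using cval_attains[OF kmax_in kmax_pos] by blast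
  then have "kmax \<le> cval ks r" using cval_mono[of y r] by simp
  moreover have "cval ks r \<le> kmax" using cval_in_set[of r] rnum_pos by simp
  ultimately show ?thesis by simp
qed

lemma less_cval_iff:
  assumes y: "1 \<le> y" "y \<le> r" and k: "k \<in> set ks"
  shows "k < cval ks y \<longleftrightarrow> k \<le> cval ks (y - 1)"
proof
  assume lt: "k < cval ks y"
  show "k \<le> cval ks (y - 1)"
  proof (rule ccontr)
    assume gt: "\<not> k \<le> cval ks (y - 1)"
    then obtain y' where y': "1 \<le> y'" "y' \<le> r" "cval ks y' = k"
      using cval_attains[OF k] by auto
    have "y - 1 < y'"
      using cval_mono[of y' "y - 1"] y y' gt by (metis diff_le_self le_trans not_less)
    moreover have "y' < y"
      using cval_mono[of y y'] y' lt by (metis not_less)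
    ultimately show False by simp
  qed
qed (use cval_pred_less[OF y] in simp)

lemma cval_pred_less_iff:
  "1 \<le> y \<Longrightarrow> y \<le> r \<Longrightarrow> k \<in> set ks \<Longrightarrow> cval ks (y - 1) < k \<longleftrightarrow> cval ks y \<le> k"
  using less_cval_iff[of y k] by auto

lemma cval_pred_rnum_less: "cval ks (r - 1) < kmax"
  using cval_pred_less[of r] rnum_pos cval_rnum by simp

lemma cval_pred_rnum_less_iff: "k \<in> set ks \<Longrightarrow> cval ks (r - 1) < k \<longleftrightarrow> k = kmax"
  using cval_pred_less_iff[of r k] rnum_pos cval_rnum cval_pred_rnum_less by (auto intro: antisym)

definition count_above :: "nat \<Rightarrow> nat" where
  "count_above y = card {x. x < s \<and> cval ks (y - 1) < ks ! x}"

lemma count_kmax: "count (mset ks) kmax = card {x. x < s \<and> ks ! x = kmax}"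
  by (simp add: count_mset count_list_eq_length_filter length_filter_conv_card eq_commute)

lemma count_above_rnum: "count_above r = count (mset ks) kmax"
  unfolding count_above_def count_kmax
  using cval_pred_rnum_less_iff cval_pred_rnum_less by (intro arg_cong[where f = card]) auto

lemma mu_cval: "1 \<le> y \<Longrightarrow> y \<le> r \<Longrightarrow> mu ks (cval ks y) = int (count_above y) - 1"
proof -
  assume y: "1 \<le> y" "y \<le> r"
  have "Kcount ks (cval ks y) = card {x. x < s \<and> \<not> cval ks (y - 1) < ks ! x}"
    unfolding Kcount_def using less_cval_iff[OF y] by (intro arg_cong[where f = card]) auto
  then show ?thesis
    using card_filter_split[of s "\<lambda>x. cval ks (y - 1) < ks ! x"] unfolding mu_def count_above_def by simp
qed

lemma count_above_pos: "1 \<le> y \<Longrightarrow> y \<le> r \<Longrightarrow> 1 \<le> count_above y"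
proof -
  assume y: "1 \<le> y" "y \<le> r"
  obtain x where "x < s" "ks ! x = cval ks y" using cval_in_set[OF y] by (auto simp: in_set_conv_nth)
  then show ?thesis
    unfolding count_above_def using cval_pred_less[OF y] by (auto simp: Suc_le_eq card_gt_0_iff)
qed

lemma count_above_ge_2: "1 \<le> y \<Longrightarrow> y < r \<Longrightarrow> 2 \<le> count_above y"
proof -
  assume y: "1 \<le> y" "y < r"
  obtain x0 where x0: "x0 < s" "ks ! x0 = cval ks y" using cval_in_set[of y] y by (auto simp: in_set_conv_nth)
  obtain x1 where x1: "x1 < s" "ks ! x1 = kmax" using kmax_in by (auto simp: in_set_conv_nth)
  have "cval ks (y - 1) < cval ks y" "cval ks y < kmax"
    using cval_pred_less[of y] cval_strict_mono[of y r] y cval_rnum by simp_all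
  then show ?thesis
    unfolding count_above_def using x0 x1 by (intro two_le_card[of _ x0 x1]) auto
qed

lemma mu_cval_nonneg: "1 \<le> y \<Longrightarrow> y \<le> r \<Longrightarrow> 0 \<le> mu ks (cval ks y)"
  using mu_cval count_above_pos by fastforce

lemma nat_mu_cval: "1 \<le> y \<Longrightarrow> y \<le> r \<Longrightarrow> count_above y = nat (mu ks (cval ks y)) + 1"
  using mu_cval count_above_pos by fastforce

lemma mu_cval_eq_0_iff:
  "1 \<le> y \<Longrightarrow> y \<le> r \<Longrightarrow> mu ks (cval ks y) = 0 \<longleftrightarrow> y = r \<and> count (mset ks) kmax = 1"
  using mu_cval count_above_rnum count_above_ge_2[of y] by (cases "y = r") auto

text \<open>On the block between two consecutive exponent values, min (k_x, m) is k_x for the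
  exponents at most the lower end and m for the others.\<close>
lemma sum_min_on_block:
  assumes y: "1 \<le> y" "y \<le> r" and m: "cval ks (y - 1) \<le> m" "m \<le> cval ks y"
  shows "sum_min ks m = sum_le ks (cval ks (y - 1)) + m * count_above y"
proof -
  let ?\<alpha> = "cval ks (y - 1)"
  have "sum_min ks m = (\<Sum>x<s. if ks ! x \<le> ?\<alpha> then ks ! x else m)"
    unfolding sum_min_def
    using cval_pred_less_iff[OF y] m by (intro sum.cong) (auto simp: min_def not_le)
  also have "\<dots> = (\<Sum>x\<in>{x. x < s \<and> ks ! x \<le> ?\<alpha>}. ks ! x) + (\<Sum>x\<in>{x. x < s \<and> ?\<alpha> < ks ! x}. m)"
    by (subst sum.If_cases) (simp_all add: lessThan_def Collect_conj_eq Int_ac Compl_eq not_le)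
  finally show ?thesis unfolding sum_le_def count_above_def by (simp add: mult.commute)
qed

end

lemma degree_sum_monom_mult:
  assumes "1 \<le> n"
  shows "degree (\<Sum>d<n. monom (1::real) (\<mu> * d)) = \<mu> * (n - 1)"
    and "(\<Sum>d<n. monom (1::real) (\<mu> * d)) \<noteq> 0"
proof -
  let ?q = "\<Sum>d<n. monom (1::real) (\<mu> * d)"
  have coeff: "coeff ?q j = real (card {d. d < n \<and> \<mu> * d = j})" for j
    by (simp add: coeff_sum coeff_monom card_filter_eq_sum[of n] of_nat_sum if_distrib cong: if_cong)
  have "card {d. d < n \<and> \<mu> * d = \<mu> * (n - 1)} \<noteq> 0"
    using assms by (auto simp: card_gt_0_iff[symmetric] intro!: exI[of _ "n - 1"])
  then have top: "coeff ?q (\<mu> * (n - 1)) \<noteq> 0" by (simp add: coeff)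
  then show "?q \<noteq> 0" by auto
  have "coeff ?q j = 0" if "\<mu> * (n - 1) < j" for j
  proof -
    have "\<mu> * d \<le> \<mu> * (n - 1)" if "d < n" for d using that by (intro mult_le_mono2) simp
    then have "{d. d < n \<and> \<mu> * d = j} = {}" using \<open>\<mu> * (n - 1) < j\<close> by fastforce
    then show ?thesis by (simp add: coeff)
  qed
  then have "degree ?q \<le> \<mu> * (n - 1)" by (intro degree_le) auto
  with le_degree[OF top] show "degree ?q = \<mu> * (n - 1)" by simp
qed

lemma poly_Ppoly: "poly (Ppoly ks \<alpha> \<beta>) x =
   x ^ (sum_le ks \<alpha> + nat (mu ks \<beta>) * (\<alpha> + 1)) * (\<Sum>d<\<beta> - \<alpha>. x ^ (nat (mu ks \<beta>) * d))"
  unfolding Ppoly_def by (simp add: poly_sum poly_monom)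

lemma degree_Ppoly: "\<alpha> < \<beta> \<Longrightarrow> degree (Ppoly ks \<alpha> \<beta>) = sum_le ks \<alpha> + nat (mu ks \<beta>) * \<beta>"
proof -
  assume "\<alpha> < \<beta>"
  then have n: "1 \<le> \<beta> - \<alpha>" by simp
  have "nat (mu ks \<beta>) * (\<alpha> + 1) + nat (mu ks \<beta>) * (\<beta> - \<alpha> - 1) = nat (mu ks \<beta>) * \<beta>"
    unfolding add_mult_distrib2[symmetric] using \<open>\<alpha> < \<beta>\<close> by simp
  then show ?thesis
    unfolding Ppoly_def using degree_sum_monom_mult[OF n]
    by (simp add: degree_mult_eq degree_monom_eq)
qed

lemma poly_Ppoly_mu_0:
  "mu ks \<beta> = 0 \<Longrightarrow> poly (Ppoly ks \<alpha> \<beta>) x = x ^ sum_le ks \<alpha> * real (\<beta> - \<alpha>)"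
  unfolding poly_Ppoly by simp

lemma poly_Ppoly_geometric:
  assumes "x ^ nat (mu ks \<beta>) \<noteq> 1"
  shows "poly (Ppoly ks \<alpha> \<beta>) x =
    x ^ (sum_le ks \<alpha> + nat (mu ks \<beta>) * (\<alpha> + 1)) * (1 - x ^ (nat (mu ks \<beta>) * (\<beta> - \<alpha>)))
    / (1 - x ^ nat (mu ks \<beta>))"
  unfolding poly_Ppoly power_mult using assms by (simp add: sum_gp_strict)

context nonzero_exponents
begin

lemma sum_min_kmax: "sum_min ks kmax = sum_list ks"
  by (rule sum_min_eq_sum_list) simp

lemma Ppoly_exponent:
  assumes y: "1 \<le> y" "y \<le> r"
  shows "int (sum_le ks (cval ks (y - 1))) + mu ks (cval ks y) * (int (cval ks (y - 1)) + 1)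
           = int s * (int (cval ks (y - 1)) + 1) - (\<Sum>l = 1..cval ks (y - 1) + 1. int (Kcount ks l) + 1)"
proof -
  let ?\<alpha> = "cval ks (y - 1)"
  define X where "X = (\<Sum>l = 1..?\<alpha> + 1. int (Kcount ks l) + 1)"
  have "int s * int (?\<alpha> + 1) - X = - int (?\<alpha> + 1) + int (sum_min ks (?\<alpha> + 1))"
    unfolding X_def by (rule Kcount_partial_sum)
  moreover have "sum_min ks (?\<alpha> + 1) = sum_le ks ?\<alpha> + (?\<alpha> + 1) * count_above y"
    using sum_min_on_block[OF y, of "?\<alpha> + 1"] cval_pred_less[OF y] by simp
  ultimately have "int s * (int ?\<alpha> + 1) - X = int (sum_le ks ?\<alpha>) + (int ?\<alpha> + 1) * int (count_above y) - int ?\<alpha> - 1"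
    by (simp add: algebra_simps)
  then show ?thesis unfolding X_def[symmetric] mu_cval[OF y] by (simp add: algebra_simps)
qed

lemma sum_block_eq_poly_Ppoly:
  assumes y: "1 \<le> y" "y \<le> r" and "0 < x"
  shows "(\<Sum>m\<in>{cval ks (y - 1)<..cval ks y}. x powi (- int m + int (sum_min ks m)))
        = poly (Ppoly ks (cval ks (y - 1)) (cval ks y)) x"
proof -
  let ?\<alpha> = "cval ks (y - 1)" and ?\<beta> = "cval ks y"
  let ?\<mu> = "nat (mu ks ?\<beta>)" and ?sl = "sum_le ks ?\<alpha>"
  have "x powi (- int m + int (sum_min ks m)) = x ^ (?sl + ?\<mu> * m)" if "m \<in> {?\<alpha><..?\<beta>}" for m
  proof -
    have "sum_min ks m = (?sl + ?\<mu> * m) + m"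
      using sum_min_on_block[OF y, of m] that nat_mu_cval[OF y] by (simp add: algebra_simps)
    moreover have "x powi (- int m + int (sum_min ks m)) = x ^ sum_min ks m / x ^ m"
      using \<open>0 < x\<close> by (intro power_int_minus_add_of_nat) simp
    ultimately show ?thesis using \<open>0 < x\<close> by (simp add: power_add)
  qed
  then have "(\<Sum>m\<in>{?\<alpha><..?\<beta>}. x powi (- int m + int (sum_min ks m))) = (\<Sum>m\<in>{?\<alpha><..?\<beta>}. x ^ (?sl + ?\<mu> * m))"
    by (rule sum.cong[OF refl])
  also have "\<dots> = (\<Sum>d<?\<beta> - ?\<alpha>. x ^ (?sl + ?\<mu> * (?\<alpha> + 1 + d)))"
    by (rule sum.reindex_bij_witness[of _ "\<lambda>d. ?\<alpha> + 1 + d" "\<lambda>m. m - ?\<alpha> - 1"]) auto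
  also have "\<dots> = poly (Ppoly ks ?\<alpha> ?\<beta>) x"
    unfolding poly_Ppoly sum_distrib_left
    by (rule sum.cong[OF refl]) (simp add: power_add[symmetric] algebra_simps)
  finally show ?thesis .
qed

lemma sum_split_cval_blocks:
  "y0 \<le> r \<Longrightarrow> (\<Sum>m = 1..cval ks y0. f m) = (\<Sum>y = 1..y0. \<Sum>m\<in>{cval ks (y - 1)<..cval ks y}. (f m :: real))"
proof (induction y0)
  case 0
  then show ?case by (simp add: cval_def)
next
  case (Suc y0)
  have "cval ks y0 < cval ks (Suc y0)" using cval_strict_mono[of y0 "Suc y0"] Suc.prems by simp
  then have "{1..cval ks (Suc y0)} = {1..cval ks y0} \<union> {cval ks y0<..cval ks (Suc y0)}" by auto
  then have "(\<Sum>m = 1..cval ks (Suc y0). f m) =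
             (\<Sum>m = 1..cval ks y0. f m) + (\<Sum>m\<in>{cval ks y0<..cval ks (Suc y0)}. f m)"
    by (simp add: sum.union_disjoint ivl_disj_int)
  then show ?case using Suc by simp
qed

lemma sum_poly_Ppoly:
  assumes "0 < x"
  shows "(\<Sum>y = 1..r. poly (Ppoly ks (cval ks (y - 1)) (cval ks y)) x)
       = (\<Sum>m = 1..kmax. x powi (- int m + int (sum_min ks m)))"
proof -
  have "(\<Sum>m = 1..kmax. x powi (- int m + int (sum_min ks m))) =
        (\<Sum>y = 1..r. \<Sum>m\<in>{cval ks (y - 1)<..cval ks y}. x powi (- int m + int (sum_min ks m)))"
    using sum_split_cval_blocks[of r] cval_rnum by simp
  also have "\<dots> = (\<Sum>y = 1..r. poly (Ppoly ks (cval ks (y - 1)) (cval ks y)) x)"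
    using sum_block_eq_poly_Ppoly[OF _ _ assms] by (intro sum.cong) auto
  finally show ?thesis by simp
qed

definition block_degree :: "nat \<Rightarrow> nat" where
  "block_degree y = (if y = 0 then 0 else degree (Ppoly ks (cval ks (y - 1)) (cval ks y)))"

lemma block_degree_eq: "y \<le> r \<Longrightarrow> block_degree y = sum_min ks (cval ks y) - cval ks y"
proof (cases "y = 0")
  case True
  then show ?thesis by (simp add: block_degree_def cval_def sum_min_def)
next
  case False
  assume "y \<le> r"
  then have y: "1 \<le> y" "y \<le> r" using False by auto
  then show ?thesis
    using False degree_Ppoly[OF cval_pred_less[OF y]] sum_min_on_block[OF y, of "cval ks y"]
      cval_pred_less[OF y] nat_mu_cval[OF y]
    by (simp add: block_degree_def algebra_simps)
qed

lemma block_degree_step: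
  assumes y: "1 \<le> y" "y \<le> r"
  shows "block_degree y = block_degree (y - 1) + nat (mu ks (cval ks y)) * (cval ks y - cval ks (y - 1))"
proof -
  let ?\<alpha> = "cval ks (y - 1)" and ?\<beta> = "cval ks y" and ?\<mu> = "nat (mu ks (cval ks y))"
  have "?\<alpha> < ?\<beta>" by (rule cval_pred_less[OF y])
  moreover have "block_degree y = sum_le ks ?\<alpha> + ?\<mu> * ?\<beta>"
    using block_degree_eq[of y] sum_min_on_block[OF y, of ?\<beta>] \<open>?\<alpha> < ?\<beta>\<close> nat_mu_cval[OF y] y
    by (simp add: algebra_simps)
  moreover have "block_degree (y - 1) = sum_le ks ?\<alpha> + ?\<mu> * ?\<alpha>"
    using block_degree_eq[of "y - 1"] sum_min_on_block[OF y, of ?\<alpha>] \<open>?\<alpha> < ?\<beta>\<close> nat_mu_cval[OF y] y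
    by (simp add: algebra_simps)
  ultimately show ?thesis by (simp add: diff_mult_distrib2)
qed

lemma block_degree_increasing:
  "(\<forall>y. 1 \<le> y \<and> y < r \<longrightarrow> block_degree (y - 1) < block_degree y) \<and>
   block_degree (r - 1) \<le> block_degree r \<and>
   (block_degree (r - 1) = block_degree r \<longleftrightarrow> count (mset ks) kmax = 1)"
proof -
  have step: "block_degree (y - 1) < block_degree y \<longleftrightarrow> mu ks (cval ks y) \<noteq> 0" if "1 \<le> y" "y \<le> r" for y
    using block_degree_step[OF that] cval_pred_less[OF that] mu_cval_nonneg[OF that] by auto
  have le: "block_degree (r - 1) \<le> block_degree r"
    using block_degree_step[of r] rnum_pos by simp
  show ?thesis
  proof (intro conjI allI impI)
    fix y assume "1 \<le> y \<and> y < r"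
    then show "block_degree (y - 1) < block_degree y" using step[of y] mu_cval_eq_0_iff[of y] by simp
  next
    show "block_degree (r - 1) = block_degree r \<longleftrightarrow> count (mset ks) kmax = 1"
      using le step[of r] mu_cval_eq_0_iff[of r] rnum_pos by auto
  qed (rule le)
qed

lemma Kcount_exponent_eq_card: "int s - (int (Kcount ks m) + 1) = int (card {x. x < s \<and> m \<le> ks ! x}) - 1"
  using card_filter_split[of s "\<lambda>x. ks ! x < m"] unfolding Kcount_def by (simp add: not_less)

lemma Kcount_exponent_nonneg: "m \<le> kmax \<Longrightarrow> 0 \<le> int s - (int (Kcount ks m) + 1)"
proof -
  assume "m \<le> kmax"
  obtain x where "x < s" "ks ! x = kmax" using kmax_in by (auto simp: in_set_conv_nth)
  then have "0 < card {x. x < s \<and> m \<le> ks ! x}"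
    using \<open>m \<le> kmax\<close> by (auto simp: card_gt_0_iff)
  then show ?thesis using Kcount_exponent_eq_card[of m] by simp
qed

lemma two_le_card_exponents_ge:
  assumes "1 \<le> m" "m \<le> cval ks (r - 1)"
  shows "2 \<le> card {x. x < s \<and> m \<le> ks ! x}"
proof -
  have "r - 1 \<noteq> 0" using assms by (auto simp: cval_def)
  then have "cval ks (r - 1) \<in> set ks" using cval_in_set[of "r - 1"] by simp
  then obtain x0 where "x0 < s" "ks ! x0 = cval ks (r - 1)" by (auto simp: in_set_conv_nth)
  moreover obtain x1 where "x1 < s" "ks ! x1 = kmax" using kmax_in by (auto simp: in_set_conv_nth)
  ultimately show ?thesis
    using assms cval_pred_rnum_less by (intro two_le_card[of _ x0 x1]) auto
qed

lemma Kcount_exponent_eq_0_iff: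
  assumes m: "1 \<le> m" "m \<le> kmax"
  shows "int s - (int (Kcount ks m) + 1) = 0 \<longleftrightarrow>
         count (mset ks) kmax = 1 \<and> cval ks (r - 1) + 1 \<le> m \<and> m \<le> cval ks r"
proof
  let ?T = "{x. x < s \<and> ks ! x = kmax}"
  assume "int s - (int (Kcount ks m) + 1) = 0"
  then have one: "card {x. x < s \<and> m \<le> ks ! x} = 1" using Kcount_exponent_eq_card[of m] by simp
  have "?T \<subseteq> {x. x < s \<and> m \<le> ks ! x}" "0 < card ?T"
    using m kmax_in by (auto simp: card_gt_0_iff in_set_conv_nth)
  then have "card ?T = 1" using one card_mono[of "{x. x < s \<and> m \<le> ks ! x}" ?T] by simp
  moreover have "cval ks (r - 1) < m" using two_le_card_exponents_ge[OF m(1)] one by fastforce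
  ultimately show "count (mset ks) kmax = 1 \<and> cval ks (r - 1) + 1 \<le> m \<and> m \<le> cval ks r"
    using count_kmax cval_rnum m by simp
next
  assume h: "count (mset ks) kmax = 1 \<and> cval ks (r - 1) + 1 \<le> m \<and> m \<le> cval ks r"
  have "{x. x < s \<and> m \<le> ks ! x} = {x. x < s \<and> ks ! x = kmax}"
  proof (intro set_eqI iffI)
    fix x assume "x \<in> {x. x < s \<and> m \<le> ks ! x}"
    then show "x \<in> {x. x < s \<and> ks ! x = kmax}" using h cval_pred_rnum_less_iff[of "ks ! x"] by auto
  qed (use m in auto)
  then show "int s - (int (Kcount ks m) + 1) = 0"
    using Kcount_exponent_eq_card[of m] h count_kmax by simp
qed

end

lemma (in prime_power_moduli) defect_trivial:
  assumes "ks \<noteq> []" "Max (set ks) = 0"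
  shows "undephased_defect I V = 1"
proof -
  have zero: "\<forall>k\<in>set ks. k \<le> 0" using Max_ge[of "set ks"] assms by simp
  then have "sum_list ks = 0" by (simp add: sum_list_eq_0_iff)
  then have "real (undephased_defect I V) = 1"
    using defect_sum_orders[OF zero, unfolded N_eq \<open>sum_list ks = 0\<close>] card_elem_order_eq_1 by simp
  then show ?thesis by simp
qed

locale kron_prime_power = prime_power_moduli a ks + nonzero_exponents ks for a ks
begin

lemma kmax_bound: "\<forall>k\<in>set ks. k \<le> kmax"
  by simp

lemma defect_eq_sum_order_counts:
  "real (undephased_defect I V) = (\<Sum>m = 0..kmax. real (a ^ sum_list ks) / real a ^ m *
      real (card {i \<in> I. elem_order ns i = a ^ m}))"
  using defect_sum_orders[OF kmax_bound, unfolded N_eq] by simp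

lemma defect_eq_sum_powi_min:
  "real (undephased_defect I V) = real (a ^ sum_list ks) / real a *
        ((real a - 1) * (1 + (\<Sum>m = 1..kmax.
            real a powi (- int m + (\<Sum>x<s. int (min (ks ! x) m)))))
         + real a powi (- int kmax + int (sum_list ks)))"
  using defect_telescoped[OF kmax_bound, unfolded N_eq sum_min_kmax] by (simp add: sum_min_def)

lemma Kcount_exponent_kmax:
  "int s * int kmax - (\<Sum>l = 1..kmax. int (Kcount ks l) + 1) = - int kmax + int (sum_list ks)"
  unfolding Kcount_partial_sum sum_min_kmax ..

lemma defect_eq_sum_powi_Kcount:
  "real (undephased_defect I V) = real (a ^ sum_list ks) / real a *
        ((real a - 1) * (1 + (\<Sum>m = 1..kmax.
            real a powi (int s * int m - (\<Sum>l = 1..m. int (Kcount ks l) + 1))))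
         + real a powi (int s * int kmax - (\<Sum>l = 1..kmax. int (Kcount ks l) + 1)))"
  unfolding Kcount_partial_sum using defect_telescoped[OF kmax_bound, unfolded N_eq] by simp

lemma Ppoly_block_properties:
  "\<forall>y \<in> {1..r}.
         mu ks (cval ks y) \<ge> 0 \<and>
         int (sum_le ks (cval ks (y - 1))) + mu ks (cval ks y) * (int (cval ks (y - 1)) + 1)
           = int s * (int (cval ks (y - 1)) + 1)
             - (\<Sum>l = 1..cval ks (y - 1) + 1. int (Kcount ks l) + 1) \<and>
         (mu ks (cval ks y) = 0 \<longleftrightarrow> y = r \<and> count (mset ks) kmax = 1) \<and>
         (mu ks (cval ks y) = 0 \<longrightarrow>
            poly (Ppoly ks (cval ks (y - 1)) (cval ks y)) (real a)
              = real a ^ sum_le ks (cval ks (y - 1)) * real (cval ks y - cval ks (y - 1))) \<and>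
         (mu ks (cval ks y) \<noteq> 0 \<longrightarrow>
            poly (Ppoly ks (cval ks (y - 1)) (cval ks y)) (real a)
              = real a ^ (sum_le ks (cval ks (y - 1)) + nat (mu ks (cval ks y)) * (cval ks (y - 1) + 1))
                * (1 - real a ^ (nat (mu ks (cval ks y)) * (cval ks y - cval ks (y - 1))))
                / (1 - real a ^ nat (mu ks (cval ks y))))" (is "\<forall>y\<in>_. ?P y")
proof
  fix y assume "y \<in> {1..r}"
  then have y: "1 \<le> y" "y \<le> r" by auto
  have pow_ne_1: "real a ^ nat (mu ks (cval ks y)) \<noteq> 1" if "mu ks (cval ks y) \<noteq> 0"
  proof -
    have "a ^ 1 \<le> a ^ nat (mu ks (cval ks y))"
      using that mu_cval_nonneg[OF y] a_ge_2 by (intro power_increasing) auto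
    then have "a ^ nat (mu ks (cval ks y)) \<noteq> 1" using that mu_cval_nonneg[OF y] a_ge_2 by simp
    then show ?thesis by (metis of_nat_1 of_nat_eq_iff of_nat_power)
  qed
  show "?P y"
    using mu_cval_nonneg[OF y] Ppoly_exponent[OF y] mu_cval_eq_0_iff[OF y]
      poly_Ppoly_mu_0 poly_Ppoly_geometric pow_ne_1 by blast
qed

lemma defect_eq_sum_poly_Ppoly:
  "real (undephased_defect I V) = real (a ^ sum_list ks) / real a *
        ((real a - 1) * (1 + (\<Sum>y = 1..r. poly (Ppoly ks (cval ks (y - 1)) (cval ks y)) (real a)))
         + real a powi (- int kmax + int (sum_list ks)))"
  using defect_telescoped[OF kmax_bound, unfolded N_eq sum_min_kmax] sum_poly_Ppoly[of "real a"] a_pos by simp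

lemma Ppoly_degrees:
  "let dg = (\<lambda>y. if y = 0 then 0 else degree (Ppoly ks (cval ks (y - 1)) (cval ks y))) in
     (\<forall>y. 1 \<le> y \<and> y < r \<longrightarrow> dg (y - 1) < dg y) \<and>
     dg (r - 1) \<le> dg r \<and>
     (dg (r - 1) = dg r \<longleftrightarrow> count (mset ks) kmax = 1)"
  using block_degree_increasing unfolding block_degree_def Let_def .

lemma defect_eq_nest:
  "real (undephased_defect I V) = real (a ^ sum_list ks) / real a *
        ((real a - 1) * nest (real a) (map (\<lambda>m. int s - (int (Kcount ks m) + 1)) [1..<kmax + 1])
         + real a powi (int s * int kmax - (\<Sum>l = 1..kmax. int (Kcount ks l) + 1)))"
proof -
  have "(\<Sum>l = 1..m. int s - (int (Kcount ks l) + 1)) = int s * int m - (\<Sum>l = 1..m. int (Kcount ks l) + 1)" for m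
    by (simp add: sum_subtractf)
  then have "nest (real a) (map (\<lambda>m. int s - (int (Kcount ks m) + 1)) [1..<kmax + 1])
      = 1 + (\<Sum>m = 1..kmax. real a powi (int s * int m - (\<Sum>l = 1..m. int (Kcount ks l) + 1)))"
    using nest_eq_sum_powi[of "real a" _ 1 kmax] a_pos by (simp add: atLeastLessThanSuc_atLeastAtMost add.commute)
  then show ?thesis using defect_eq_sum_powi_Kcount by simp
qed

lemma Kcount_exponent_properties:
  "\<forall>m \<in> {1..kmax}. int s - (int (Kcount ks m) + 1) \<ge> 0 \<and>
     (int s - (int (Kcount ks m) + 1) = 0 \<longleftrightarrow>
        count (mset ks) kmax = 1 \<and> cval ks (r - 1) + 1 \<le> m \<and> m \<le> cval ks r)"
  using Kcount_exponent_nonneg Kcount_exponent_eq_0_iff by auto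

end

theorem theorem5p4:
  fixes a :: nat and ks :: "nat list"
  defines "ns \<equiv> map (\<lambda>k. a ^ k) ks"
  defines "s \<equiv> length ks"
  defines "N \<equiv> a ^ sum_list ks"
  defines "kmax \<equiv> Max (set ks)"
  defines "D \<equiv> undephased_defect (index_set ns) (fourier_kron ns)"
  defines "r \<equiv> rnum ks"
  defines "e \<equiv> (\<lambda>m. int s - (int (Kcount ks m) + 1))"
  assumes "prime a" and "ks \<noteq> []"
  shows
   "(kmax = 0 \<longrightarrow> D = 1) \<and>
    (0 < kmax \<longrightarrow>
      \<comment> \<open>(a)\<close>
      real D = (\<Sum>m = 0..kmax. real N / real a ^ m *
                  real (card {i \<in> index_set ns. elem_order ns i = a ^ m})) \<and>
      \<comment> \<open>(b)\<close>
      real D = real N / real a *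
        ((real a - 1) * (1 + (\<Sum>m = 1..kmax.
            real a powi (- int m + (\<Sum>x<s. int (min (ks ! x) m)))))
         + real a powi (- int kmax + int (sum_list ks))) \<and>
      \<comment> \<open>(c)\<close>
      real D = real N / real a *
        ((real a - 1) * (1 + (\<Sum>m = 1..kmax.
            real a powi (int s * int m - (\<Sum>l = 1..m. int (Kcount ks l) + 1))))
         + real a powi (int s * int kmax - (\<Sum>l = 1..kmax. int (Kcount ks l) + 1))) \<and>
      int s * int kmax - (\<Sum>l = 1..kmax. int (Kcount ks l) + 1)
        = - int kmax + int (sum_list ks) \<and>
      \<comment> \<open>(d)\<close>
      (\<forall>y \<in> {1..r}.
         mu ks (cval ks y) \<ge> 0 \<and>
         int (sum_le ks (cval ks (y - 1))) + mu ks (cval ks y) * (int (cval ks (y - 1)) + 1)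
           = int s * (int (cval ks (y - 1)) + 1)
             - (\<Sum>l = 1..cval ks (y - 1) + 1. int (Kcount ks l) + 1) \<and>
         (mu ks (cval ks y) = 0 \<longleftrightarrow> y = r \<and> count (mset ks) kmax = 1) \<and>
         (mu ks (cval ks y) = 0 \<longrightarrow>
            poly (Ppoly ks (cval ks (y - 1)) (cval ks y)) (real a)
              = real a ^ sum_le ks (cval ks (y - 1)) * real (cval ks y - cval ks (y - 1))) \<and>
         (mu ks (cval ks y) \<noteq> 0 \<longrightarrow>
            poly (Ppoly ks (cval ks (y - 1)) (cval ks y)) (real a)
              = real a ^ (sum_le ks (cval ks (y - 1)) + nat (mu ks (cval ks y)) * (cval ks (y - 1) + 1))
                * (1 - real a ^ (nat (mu ks (cval ks y)) * (cval ks y - cval ks (y - 1))))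
                / (1 - real a ^ nat (mu ks (cval ks y))))) \<and>
      real D = real N / real a *
        ((real a - 1) * (1 + (\<Sum>y = 1..r. poly (Ppoly ks (cval ks (y - 1)) (cval ks y)) (real a)))
         + real a powi (- int kmax + int (sum_list ks))) \<and>
      (let dg = (\<lambda>y. if y = 0 then 0 else degree (Ppoly ks (cval ks (y - 1)) (cval ks y))) in
         (\<forall>y. 1 \<le> y \<and> y < r \<longrightarrow> dg (y - 1) < dg y) \<and>
         dg (r - 1) \<le> dg r \<and>
         (dg (r - 1) = dg r \<longleftrightarrow> count (mset ks) kmax = 1)) \<and>
      \<comment> \<open>(e)\<close>
      real D = real N / real a *
        ((real a - 1) * nest (real a) (map e [1..<kmax + 1])
         + real a powi (int s * int kmax - (\<Sum>l = 1..kmax. int (Kcount ks l) + 1))) \<and>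
      (\<forall>m \<in> {1..kmax}. e m \<ge> 0 \<and>
         (e m = 0 \<longleftrightarrow> count (mset ks) kmax = 1 \<and> cval ks (r - 1) + 1 \<le> m \<and> m \<le> cval ks r)))"
proof -
  interpret prime_power_moduli a ks
    using \<open>prime a\<close> by unfold_locales
  have nonzero: "kron_prime_power a ks" if "0 < Max (set ks)"
    using \<open>prime a\<close> \<open>ks \<noteq> []\<close> that by unfold_locales
  note facts = kron_prime_power.defect_eq_sum_order_counts[OF nonzero]
    kron_prime_power.defect_eq_sum_powi_min[OF nonzero]
    kron_prime_power.defect_eq_sum_powi_Kcount[OF nonzero]
    kron_prime_power.Kcount_exponent_kmax[OF nonzero]
    kron_prime_power.Ppoly_block_properties[OF nonzero]
    kron_prime_power.defect_eq_sum_poly_Ppoly[OF nonzero]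
    kron_prime_power.Ppoly_degrees[OF nonzero]
    kron_prime_power.defect_eq_nest[OF nonzero]
    kron_prime_power.Kcount_exponent_properties[OF nonzero]
  show ?thesis
    unfolding ns_def s_def N_def kmax_def D_def r_def e_def
    by (intro conjI impI) (rule defect_trivial[OF \<open>ks \<noteq> []\<close>] facts; assumption)+
qed

end
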